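(* Let $0\le p_c\le p_d\le 1$. For $\delta_1,\delta_2\in[0,1]$ let $R_{sum}(\delta_1,\delta_2)$ be the Han–Kobayashi sum-rate with time-sharing defined in the context. Then $$\max_{\delta_1,\delta_2\in[0,1]} R_{sum}(\delta_1,\delta_2)=\begin{cases}2p_d(1-p_c) & \text{if } p_c\le \frac{p_d}{1+p_d},\\ p_d+p_c-p_dp_c+\frac{p_d-p_c}{2}C_\delta^* & \text{if } \frac{p_d}{1+p_d}<p_c\le p_d,\end{cases}$$ where $C_\delta^*=\frac{p_dp_c-(p_d-p_c)}{p_dp_c-\frac{p_d-p_c}{2}}$.
   Context: Channel (single-letter): $Y_1=G_{11}X_1\oplus G_{21}X_2$, $Y_2=G_{22}X_2\oplus G_{12}X_1$ over $\mathbb{F}_2$, with $G_{11},G_{22}\sim\mathcal{B}(p_d)$, $G_{12},G_{21}\sim\mathcal{B}(p_c)$ mutually independent and independent of the inputs; $\mathcal{B}(p)$ is Bernoulli with $\Pr(1)=p$. Scheme: $Q$ is uniform on $\{1,2\}$ (a time-sharing variable known to all). Given $Q$, the variables $X_{1c},X_{1p},X_{2c},X_{2p}$ are conditionally independent with: if $Q=1$, $X_{1c}\sim\mathcal{B}(\delta_1/2)$, $X_{1p}\sim\mathcal{B}(1-\frac{1}{2-\delta_1})$, $X_{2c}\sim\mathcal{B}(\delta_2/2)$, $X_{2p}\sim\mathcal{B}(1-\frac{1}{2-\delta_2})$; if $Q=2$, the roles of $\delta_1,\delta_2$ are swapped. The inputs are $X_i=\max(X_{ic},X_{ip})$ (so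 $X_i\sim\mathcal{B}(1/2)$). Let $\mathbf{G}_1=(G_{11},G_{21})$, $\mathbf{G}_2=(G_{22},G_{12})$. Define $R_{sum}(\delta_1,\delta_2)$ as the maximum of $R_{1c}+R_{1p}+R_{2c}+R_{2p}$ over nonnegative rates satisfying, for $i=1,2$: $R_{ip}\le I(X_{ip};Y_i\mid X_{1c},X_{2c},Q,\mathbf{G}_i)$, and for each $j=1,2$: $R_{1c}+R_{2c}\le I(X_{1c},X_{2c};Y_j\mid Q,\mathbf{G}_j)$, $R_{1c}\le I(X_{1c};Y_j\mid X_{2c},Q,\mathbf{G}_j)$, $R_{2c}\le I(X_{2c};Y_j\mid X_{1c},Q,\mathbf{G}_j)$ (i.e. both common messages are decoded at both receivers and each private message is decoded last at its own receiver). *)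

theory Defs
  imports Complex_Main
begin

definition pr :: "'w set \<Rightarrow> ('w \<Rightarrow> real) \<Rightarrow> ('w \<Rightarrow> bool) \<Rightarrow> real" where
  "pr Om P E = (\<Sum>w\<in>Om. if E w then P w else 0)"

text \<open>Conditional mutual information I(A;B|C) in bits (base-2 logarithm):
  sum over outcomes of p(a,b,c) log [ p(a,b,c) p(c) / (p(a,c) p(b,c)) ].
  Outcomes of mass zero contribute zero.\<close>

definition cmi :: "'w set \<Rightarrow> ('w \<Rightarrow> real) \<Rightarrow> ('w \<Rightarrow> 'a) \<Rightarrow> ('w \<Rightarrow> 'b) \<Rightarrow> ('w \<Rightarrow> 'c) \<Rightarrow> real" where
  "cmi Om P A B C =
     (\<Sum>w\<in>Om. P w *
        log 2 ((pr Om P (\<lambda>v. A v = A w \<and> B v = B w \<and> C v = C w) * pr Om P (\<lambda>v. C v = C w))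
             / (pr Om P (\<lambda>v. A v = A w \<and> C v = C w) * pr Om P (\<lambda>v. B v = B w \<and> C v = C w))))"

text \<open>Bernoulli(p) mass function, Pr(1) = p (True encodes 1).\<close>

definition bern :: "real \<Rightarrow> bool \<Rightarrow> real" where
  "bern p b = (if b then p else 1 - p)"

text \<open>Outcome: (Q, X1c, X1p, X2c, X2p, G11, G21, G22, G12), Q \<in> {1,2}.\<close>

type_synonym outcome = "nat \<times> bool \<times> bool \<times> bool \<times> bool \<times> bool \<times> bool \<times> bool \<times> bool"

definition Omega :: "outcome set" where
  "Omega = {1::nat, 2} \<times> UNIV"

definition oQ :: "outcome \<Rightarrow> nat" where "oQ w = fst w"
definition oX1c :: "outcome \<Rightarrow> bool" where "oX1c w = fst (snd w)"
definition oX1p :: "outcome \<Rightarrow> bool" where "oX1p w = fst (snd (snd w))"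
definition oX2c :: "outcome \<Rightarrow> bool" where "oX2c w = fst (snd (snd (snd w)))"
definition oX2p :: "outcome \<Rightarrow> bool" where "oX2p w = fst (snd (snd (snd (snd w))))"
definition oG11 :: "outcome \<Rightarrow> bool" where "oG11 w = fst (snd (snd (snd (snd (snd w)))))"
definition oG21 :: "outcome \<Rightarrow> bool" where "oG21 w = fst (snd (snd (snd (snd (snd (snd w))))))"
definition oG22 :: "outcome \<Rightarrow> bool" where "oG22 w = fst (snd (snd (snd (snd (snd (snd (snd w)))))))"
definition oG12 :: "outcome \<Rightarrow> bool" where "oG12 w = snd (snd (snd (snd (snd (snd (snd (snd w)))))))"

text \<open>Inputs X_i = max(X_ic, X_ip) (= OR over F_2) and outputs over F_2 (AND = product, XOR = sum).\<close>

definition oX1 :: "outcome \<Rightarrow> bool" where "oX1 w = (oX1c w \<or> oX1p w)"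
definition oX2 :: "outcome \<Rightarrow> bool" where "oX2 w = (oX2c w \<or> oX2p w)"
definition oY1 :: "outcome \<Rightarrow> bool" where "oY1 w = ((oG11 w \<and> oX1 w) \<noteq> (oG21 w \<and> oX2 w))"
definition oY2 :: "outcome \<Rightarrow> bool" where "oY2 w = ((oG22 w \<and> oX2 w) \<noteq> (oG12 w \<and> oX1 w))"

definition oGv1 :: "outcome \<Rightarrow> bool \<times> bool" where "oGv1 w = (oG11 w, oG21 w)"
definition oGv2 :: "outcome \<Rightarrow> bool \<times> bool" where "oGv2 w = (oG22 w, oG12 w)"

definition joint :: "real \<Rightarrow> real \<Rightarrow> real \<Rightarrow> real \<Rightarrow> outcome \<Rightarrow> real" where
  "joint pd pc d1 d2 w =
     (let a = (if oQ w = 1 then d1 else d2); b = (if oQ w = 1 then d2 else d1) in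
      (1/2) * bern (a/2) (oX1c w) * bern (1 - 1/(2 - a)) (oX1p w)
            * bern (b/2) (oX2c w) * bern (1 - 1/(2 - b)) (oX2p w)
            * bern pd (oG11 w) * bern pc (oG21 w) * bern pd (oG22 w) * bern pc (oG12 w))"

text \<open>Achievable rate constraints (both common messages decoded at both receivers,
  private message decoded last at its own receiver).\<close>

definition HK_rates :: "real \<Rightarrow> real \<Rightarrow> real \<Rightarrow> real \<Rightarrow> real \<Rightarrow> real \<Rightarrow> real \<Rightarrow> real \<Rightarrow> bool" where
  "HK_rates pd pc d1 d2 r1c r1p r2c r2p \<longleftrightarrow>
     (      0 \<le> r1c \<and> 0 \<le> r1p \<and> 0 \<le> r2c \<and> 0 \<le> r2p \<and>
      r1p \<le> cmi Omega (joint pd pc d1 d2) oX1p oY1 (\<lambda>w. (oX1c w, oX2c w, oQ w, oGv1 w)) \<and>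
      r2p \<le> cmi Omega (joint pd pc d1 d2) oX2p oY2 (\<lambda>w. (oX1c w, oX2c w, oQ w, oGv2 w)) \<and>
      r1c + r2c \<le> cmi Omega (joint pd pc d1 d2) (\<lambda>w. (oX1c w, oX2c w)) oY1 (\<lambda>w. (oQ w, oGv1 w)) \<and>
      r1c \<le> cmi Omega (joint pd pc d1 d2) oX1c oY1 (\<lambda>w. (oX2c w, oQ w, oGv1 w)) \<and>
      r2c \<le> cmi Omega (joint pd pc d1 d2) oX2c oY1 (\<lambda>w. (oX1c w, oQ w, oGv1 w)) \<and>
      r1c + r2c \<le> cmi Omega (joint pd pc d1 d2) (\<lambda>w. (oX1c w, oX2c w)) oY2 (\<lambda>w. (oQ w, oGv2 w)) \<and>
      r1c \<le> cmi Omega (joint pd pc d1 d2) oX1c oY2 (\<lambda>w. (oX2c w, oQ w, oGv2 w)) \<and>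
      r2c \<le> cmi Omega (joint pd pc d1 d2) oX2c oY2 (\<lambda>w. (oX1c w, oQ w, oGv2 w)))"

text \<open>R_sum(d1,d2): the maximum (supremum of a nonempty, bounded, closed set) of the sum rate.\<close>

definition Rsum :: "real \<Rightarrow> real \<Rightarrow> real \<Rightarrow> real \<Rightarrow> real" where
  "Rsum pd pc d1 d2 =
     Sup {r1c + r1p + r2c + r2p | r1c r1p r2c r2p. HK_rates pd pc d1 d2 r1c r1p r2c r2p}"

definition Cstar :: "real \<Rightarrow> real \<Rightarrow> real" where
  "Cstar pd pc = (pd * pc - (pd - pc)) / (pd * pc - (pd - pc) / 2)"

end

theory Submission
  imports Defs "HOL-Real_Asymp.Real_Asymp"
begin

(* Conditioned on the time-sharing slot and the channel gains, the four input bits are independent,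
   so every mutual information in the rate region is an average over eight cells of explicit binary
   entropies.  Let U be the mean over the two users of H(X_ip | X_ic) = (1 - d/2) h(1 - 1/(2 - d)),
   and E >= 0 the entropy lost when both private signals reach a receiver.  The sum rate is then
   bounded by S + (pd - pc) U - E (private constraints plus the common sum constraint) and by
   2 pc + 2 (pd - pc - pd pc) U (private constraints plus the individual common constraints),
   where S = pd + pc - pd pc.  If pc <= pd / (1 + pd) the second bound increases with U <= 1 and
   d1 = d2 = 0 attains it; otherwise the bounds cross at U = C*/2, which d1 = 1 (so E = 0) and a
   d2 found by the intermediate value theorem attain. *)

section \<open>Entropy and conditional mutual information of finite distributions\<close>

lemma pr_nonneg: "\<forall>v\<in>Om. 0 \<le> P v \<Longrightarrow> 0 \<le> pr Om P E"
  unfolding pr_def by (rule sum_nonneg) auto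

lemma pr_ge_mass: assumes "finite Om" "\<forall>v\<in>Om. 0 \<le> P v" "w \<in> Om" "E w"
  shows "P w \<le> pr Om P E"
proof -
  have "(if E w then P w else 0) \<le> pr Om P E"
    unfolding pr_def using assms by (intro member_le_sum) auto
  thus ?thesis using assms by simp
qed

lemma pr_cong: "(\<And>v. v \<in> Om \<Longrightarrow> E v = E' v) \<Longrightarrow> (\<And>v. v \<in> Om \<Longrightarrow> P v = P' v) \<Longrightarrow> pr Om P E = pr Om P' E'"
  unfolding pr_def by (rule sum.cong) auto

lemma pr_mono: assumes "\<forall>v\<in>Om. 0 \<le> P v" "\<And>v. v \<in> Om \<Longrightarrow> E v \<Longrightarrow> E' v"
  shows "pr Om P E \<le> pr Om P E'"
  unfolding pr_def using assms by (intro sum_mono) auto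

lemma pr_False [simp]: "pr Om P (\<lambda>_. False) = 0"
  by (simp add: pr_def)

lemma cmi_cong:
  assumes "\<And>v w. v \<in> Om \<Longrightarrow> w \<in> Om \<Longrightarrow> (A v = A w) = (A' v = A' w)"
    "\<And>v w. v \<in> Om \<Longrightarrow> w \<in> Om \<Longrightarrow> (B v = B w) = (B' v = B' w)"
    "\<And>v w. v \<in> Om \<Longrightarrow> w \<in> Om \<Longrightarrow> (C v = C w) = (C' v = C' w)"
    "\<And>v. v \<in> Om \<Longrightarrow> P v = P' v"
  shows "cmi Om P A B C = cmi Om P' A' B' C'"
  unfolding cmi_def
proof (rule sum.cong[OF refl])
  fix w assume w: "w \<in> Om"
  have e: "\<And>E E'. (\<And>v. v \<in> Om \<Longrightarrow> E v = E' v) \<Longrightarrow> pr Om P E = pr Om P' E'"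
    by (rule pr_cong) (auto simp: assms(4))
  have 1: "pr Om P (\<lambda>v. A v = A w \<and> B v = B w \<and> C v = C w) = pr Om P' (\<lambda>v. A' v = A' w \<and> B' v = B' w \<and> C' v = C' w)"
    by (rule e) (simp add: assms(1-3) w)
  have 2: "pr Om P (\<lambda>v. C v = C w) = pr Om P' (\<lambda>v. C' v = C' w)"
    by (rule e) (simp add: assms(1-3) w)
  have 3: "pr Om P (\<lambda>v. A v = A w \<and> C v = C w) = pr Om P' (\<lambda>v. A' v = A' w \<and> C' v = C' w)"
    by (rule e) (simp add: assms(1-3) w)
  have 4: "pr Om P (\<lambda>v. B v = B w \<and> C v = C w) = pr Om P' (\<lambda>v. B' v = B' w \<and> C' v = C' w)"
    by (rule e) (simp add: assms(1-3) w)
  show "P w * log 2 (pr Om P (\<lambda>v. A v = A w \<and> B v = B w \<and> C v = C w) * pr Om P (\<lambda>v. C v = C w) /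
          (pr Om P (\<lambda>v. A v = A w \<and> C v = C w) * pr Om P (\<lambda>v. B v = B w \<and> C v = C w))) =
      P' w * log 2 (pr Om P' (\<lambda>v. A' v = A' w \<and> B' v = B' w \<and> C' v = C' w) * pr Om P' (\<lambda>v. C' v = C' w) /
          (pr Om P' (\<lambda>v. A' v = A' w \<and> C' v = C' w) * pr Om P' (\<lambda>v. B' v = B' w \<and> C' v = C' w)))"
    unfolding 1 2 3 4 using assms(4) w by simp
qed

definition entropy :: "'w set \<Rightarrow> ('w \<Rightarrow> real) \<Rightarrow> ('w \<Rightarrow> 'a) \<Rightarrow> real" where
  "entropy Om P F = - (\<Sum>w\<in>Om. P w * log 2 (pr Om P (\<lambda>v. F v = F w)))"

lemma cmi_eq_entropies:
  assumes fin: "finite Om" and nn: "\<forall>w\<in>Om. 0 \<le> P w"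
  shows "cmi Om P A B C = entropy Om P (\<lambda>w. (A w, C w)) + entropy Om P (\<lambda>w. (B w, C w))
          - entropy Om P (\<lambda>w. (A w, B w, C w)) - entropy Om P C"
proof -
  have "\<And>w. w \<in> Om \<Longrightarrow> P w *
        log 2 ((pr Om P (\<lambda>v. A v = A w \<and> B v = B w \<and> C v = C w) * pr Om P (\<lambda>v. C v = C w))
             / (pr Om P (\<lambda>v. A v = A w \<and> C v = C w) * pr Om P (\<lambda>v. B v = B w \<and> C v = C w)))
     = P w * log 2 (pr Om P (\<lambda>v. (A v, B v, C v) = (A w, B w, C w))) + P w * log 2 (pr Om P (\<lambda>v. C v = C w))
      - P w * log 2 (pr Om P (\<lambda>v. (A v, C v) = (A w, C w))) - P w * log 2 (pr Om P (\<lambda>v. (B v, C v) = (B w, C w)))"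
  proof -
    fix w assume w: "w \<in> Om"
    show "?thesis w"
    proof (cases "P w = 0")
      case True then show ?thesis by simp
    next
      case False
      then have pw: "0 < P w" using nn w by force
      have g: "\<And>E. E w \<Longrightarrow> 0 < pr Om P E" using pr_ge_mass[OF fin nn w] pw by force
      have 1: "0 < pr Om P (\<lambda>v. A v = A w \<and> B v = B w \<and> C v = C w)" by (rule g) simp
      have 2: "0 < pr Om P (\<lambda>v. C v = C w)" by (rule g) simp
      have 3: "0 < pr Om P (\<lambda>v. A v = A w \<and> C v = C w)" by (rule g) simp
      have 4: "0 < pr Om P (\<lambda>v. B v = B w \<and> C v = C w)" by (rule g) simp
      show ?thesis using 1 2 3 4
        by (simp add: log_mult log_divide algebra_simps)
    qed
  qed
  then show ?thesis unfolding cmi_def entropy_def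
    by (simp add: sum.distrib sum_subtractf)
qed

lemma sum_pushforward:
  assumes "finite Om" "finite Om'" "\<pi> ` Om \<subseteq> Om'"
  shows "(\<Sum>y\<in>Om'. (\<Sum>w\<in>{w\<in>Om. \<pi> w = y}. P w) * f y) = (\<Sum>w\<in>Om. P w * (f (\<pi> w)::real))"
proof -
  have "(\<Sum>y\<in>Om'. (\<Sum>w\<in>{w\<in>Om. \<pi> w = y}. P w) * f y) = (\<Sum>y\<in>Om'. (\<Sum>w\<in>{w\<in>Om. \<pi> w = y}. P w * f y))"
    by (rule sum.cong[OF refl], rule sum_distrib_right)
  also have "\<dots> = (\<Sum>y\<in>Om'. (\<Sum>w\<in>{w\<in>Om. \<pi> w = y}. P w * f (\<pi> w)))"
    by (auto intro!: sum.cong)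
  also have "\<dots> = (\<Sum>w\<in>Om. P w * f (\<pi> w))"
    using assms by (rule sum.group)
  finally show ?thesis .
qed

lemma pr_pushforward:
  assumes "finite Om" "finite Om'" "\<pi> ` Om \<subseteq> Om'"
    and P': "\<And>y. y \<in> Om' \<Longrightarrow> P' y = (\<Sum>w\<in>{w\<in>Om. \<pi> w = y}. P w)"
  shows "pr Om' P' E = pr Om P (\<lambda>w. E (\<pi> w))"
proof -
  have "pr Om' P' E = (\<Sum>y\<in>Om'. (\<Sum>w\<in>{w\<in>Om. \<pi> w = y}. P w) * (if E y then 1 else 0))"
    unfolding pr_def by (rule sum.cong) (auto simp: P')
  also have "\<dots> = (\<Sum>w\<in>Om. P w * (if E (\<pi> w) then 1 else 0))"
    by (rule sum_pushforward[OF assms(1-3)])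
  also have "\<dots> = pr Om P (\<lambda>w. E (\<pi> w))" unfolding pr_def by (rule sum.cong) auto
  finally show ?thesis .
qed

lemma cmi_pushforward_comp:
  assumes fin: "finite Om" "finite Om'" "\<pi> ` Om \<subseteq> Om'"
    and P': "\<And>y. y \<in> Om' \<Longrightarrow> P' y = (\<Sum>w\<in>{w\<in>Om. \<pi> w = y}. P w)"
  shows "cmi Om P (\<lambda>w. A' (\<pi> w)) (\<lambda>w. B' (\<pi> w)) (\<lambda>w. C' (\<pi> w)) = cmi Om' P' A' B' C'"
proof -
  define f where "f y = log 2 ((pr Om' P' (\<lambda>v. A' v = A' y \<and> B' v = B' y \<and> C' v = C' y) * pr Om' P' (\<lambda>v. C' v = C' y))
             / (pr Om' P' (\<lambda>v. A' v = A' y \<and> C' v = C' y) * pr Om' P' (\<lambda>v. B' v = B' y \<and> C' v = C' y)))" for y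
  have pp: "\<And>E. pr Om' P' E = pr Om P (\<lambda>w. E (\<pi> w))" by (rule pr_pushforward[OF fin P'])
  have "cmi Om' P' A' B' C' = (\<Sum>y\<in>Om'. (\<Sum>w\<in>{w\<in>Om. \<pi> w = y}. P w) * f y)"
    unfolding cmi_def f_def by (rule sum.cong) (auto simp: P')
  also have "\<dots> = (\<Sum>w\<in>Om. P w * f (\<pi> w))" by (rule sum_pushforward[OF fin])
  also have "\<dots> = cmi Om P (\<lambda>w. A' (\<pi> w)) (\<lambda>w. B' (\<pi> w)) (\<lambda>w. C' (\<pi> w))"
    unfolding cmi_def f_def pp by simp
  finally show ?thesis by simp
qed

lemma cmi_pushforward:
  assumes fin: "finite Om" "finite Om'" "\<pi> ` Om \<subseteq> Om'"
    and P': "\<And>y. y \<in> Om' \<Longrightarrow> P' y = (\<Sum>w\<in>{w\<in>Om. \<pi> w = y}. P w)"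
    and eq: "\<And>w. w \<in> Om \<Longrightarrow> A w = A' (\<pi> w) \<and> B w = B' (\<pi> w) \<and> C w = C' (\<pi> w)"
  shows "cmi Om P A B C = cmi Om' P' A' B' C'"
proof -
  have "cmi Om P A B C = cmi Om P (\<lambda>w. A' (\<pi> w)) (\<lambda>w. B' (\<pi> w)) (\<lambda>w. C' (\<pi> w))"
    by (rule cmi_cong) (simp_all add: eq)
  also have "\<dots> = cmi Om' P' A' B' C'" by (rule cmi_pushforward_comp[OF fin P'])
  finally show ?thesis .
qed

lemma cmi_bij_betw:
  assumes fin: "finite Om" and bij: "bij_betw h Om Om'"
    and P: "\<And>w. w \<in> Om \<Longrightarrow> P w = P' (h w)"
    and eq: "\<And>w. w \<in> Om \<Longrightarrow> A w = A' (h w) \<and> B w = B' (h w) \<and> C w = C' (h w)"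
  shows "cmi Om P A B C = cmi Om' P' A' B' C'"
proof (rule cmi_pushforward[where \<pi>=h])
  show "\<And>w. w \<in> Om \<Longrightarrow> A w = A' (h w) \<and> B w = B' (h w) \<and> C w = C' (h w)" by (rule eq)
  show "finite Om" by (rule fin)
  show "finite Om'" using bij fin bij_betw_finite by blast
  show "h ` Om \<subseteq> Om'" using bij by (simp add: bij_betw_def)
  fix y assume y: "y \<in> Om'"
  then obtain w where w: "w \<in> Om" "h w = y" using bij by (auto simp: bij_betw_def)
  have "{w' \<in> Om. h w' = y} = {w}" using w bij by (auto simp: bij_betw_def inj_on_def)
  then show "P' y = (\<Sum>w\<in>{w \<in> Om. h w = y}. P w)" using w P by simp
qed

lemma sum_Times: "sum g (A \<times> B) = (\<Sum>a\<in>A. \<Sum>b\<in>B. g (a,b))"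
  by (subst sum.cartesian_product) simp

lemma pr_mixture_cell:
  assumes K: "finite K" and k: "k \<in> K" and x: "x \<in> X"
    and det: "\<And>k' x'. k' \<in> K \<Longrightarrow> x' \<in> X \<Longrightarrow> C (k',x') = C (k,x) \<Longrightarrow> k' = k"
  shows "pr (K \<times> X) (\<lambda>(k,x). Pk k * Px k x) (\<lambda>v. E v \<and> C v = C (k,x))
       = Pk k * pr X (Px k) (\<lambda>x'. E (k,x') \<and> C (k,x') = C (k,x))"
proof -
  have "pr (K \<times> X) (\<lambda>(k,x). Pk k * Px k x) (\<lambda>v. E v \<and> C v = C (k,x))
     = (\<Sum>k'\<in>K. \<Sum>x'\<in>X. if E (k',x') \<and> C (k',x') = C (k,x) then Pk k' * Px k' x' else 0)"
    unfolding pr_def sum_Times by (simp only: prod.case)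
  also have "\<dots> = (\<Sum>k'\<in>K. if k' = k then (\<Sum>x'\<in>X. if E (k,x') \<and> C (k,x') = C (k,x) then Pk k * Px k x' else 0) else 0)"
    apply (rule sum.cong, simp)
    using det by (auto intro!: sum.neutral)
  also have "\<dots> = Pk k * pr X (Px k) (\<lambda>x'. E (k,x') \<and> C (k,x') = C (k,x))"
    using K k unfolding pr_def by (simp add: sum_distrib_left if_distrib cong: if_cong)
  finally show ?thesis .
qed

lemma cmi_mixture:
  assumes K: "finite K"
    and det: "\<And>k x k' x'. k \<in> K \<Longrightarrow> x \<in> X \<Longrightarrow> k' \<in> K \<Longrightarrow> x' \<in> X \<Longrightarrow> C (k',x') = C (k,x) \<Longrightarrow> k' = k"
  shows "cmi (K \<times> X) (\<lambda>(k,x). Pk k * Px k x) A B C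
       = (\<Sum>k\<in>K. Pk k * cmi X (Px k) (\<lambda>x. A (k,x)) (\<lambda>x. B (k,x)) (\<lambda>x. C (k,x)))"
proof -
  let ?P = "(\<lambda>(k,x). Pk k * Px k x)"
  have c1: "\<And>k x E. k \<in> K \<Longrightarrow> x \<in> X \<Longrightarrow> pr (K \<times> X) ?P (\<lambda>v. E v \<and> C v = C (k,x))
       = Pk k * pr X (Px k) (\<lambda>x'. E (k,x') \<and> C (k,x') = C (k,x))"
    by (rule pr_mixture_cell[OF K]) (auto intro: det)
  have c2: "\<And>k x. k \<in> K \<Longrightarrow> x \<in> X \<Longrightarrow> pr (K \<times> X) ?P (\<lambda>v. C v = C (k,x))
       = Pk k * pr X (Px k) (\<lambda>x'. C (k,x') = C (k,x))"
    using c1[where E="\<lambda>_. True"] by simp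
  have "cmi (K \<times> X) ?P A B C = (\<Sum>k\<in>K. \<Sum>x\<in>X. Pk k * (Px k x *
        log 2 ((pr X (Px k) (\<lambda>v. A (k,v) = A (k,x) \<and> B (k,v) = B (k,x) \<and> C (k,v) = C (k,x)) * pr X (Px k) (\<lambda>v. C (k,v) = C (k,x)))
             / (pr X (Px k) (\<lambda>v. A (k,v) = A (k,x) \<and> C (k,v) = C (k,x)) * pr X (Px k) (\<lambda>v. B (k,v) = B (k,x) \<and> C (k,v) = C (k,x))))))"
    unfolding cmi_def sum_Times prod.case
  proof (rule sum.cong[OF refl], rule sum.cong[OF refl])
    fix k x assume k: "k \<in> K" and x: "x \<in> X"
    have e1: "pr (K \<times> X) ?P (\<lambda>v. A v = A (k,x) \<and> B v = B (k,x) \<and> C v = C (k,x)) =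
         Pk k * pr X (Px k) (\<lambda>v. A (k,v) = A (k,x) \<and> B (k,v) = B (k,x) \<and> C (k,v) = C (k,x))"
      using c1[OF k x, of "\<lambda>v. A v = A (k,x) \<and> B v = B (k,x)"] by simp
    have e2: "pr (K \<times> X) ?P (\<lambda>v. A v = A (k,x) \<and> C v = C (k,x)) =
         Pk k * pr X (Px k) (\<lambda>v. A (k,v) = A (k,x) \<and> C (k,v) = C (k,x))"
      using c1[OF k x, of "\<lambda>v. A v = A (k,x)"] by simp
    have e3: "pr (K \<times> X) ?P (\<lambda>v. B v = B (k,x) \<and> C v = C (k,x)) =
         Pk k * pr X (Px k) (\<lambda>v. B (k,v) = B (k,x) \<and> C (k,v) = C (k,x))"
      using c1[OF k x, of "\<lambda>v. B v = B (k,x)"] by simp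
    show "(Pk k * Px k x) *
        log 2 (pr (K \<times> X) ?P (\<lambda>v. A v = A (k, x) \<and> B v = B (k, x) \<and> C v = C (k, x)) *
            pr (K \<times> X) ?P (\<lambda>v. C v = C (k, x)) /
            (pr (K \<times> X) ?P (\<lambda>v. A v = A (k, x) \<and> C v = C (k, x)) *
             pr (K \<times> X) ?P (\<lambda>v. B v = B (k, x) \<and> C v = C (k, x)))) = Pk k * (Px k x *
        log 2 ((pr X (Px k) (\<lambda>v. A (k,v) = A (k,x) \<and> B (k,v) = B (k,x) \<and> C (k,v) = C (k,x)) * pr X (Px k) (\<lambda>v. C (k,v) = C (k,x)))
             / (pr X (Px k) (\<lambda>v. A (k,v) = A (k,x) \<and> C (k,v) = C (k,x)) * pr X (Px k) (\<lambda>v. B (k,v) = B (k,x) \<and> C (k,v) = C (k,x)))))"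
      unfolding e1 e2 e3 c2[OF k x]
      by (cases "Pk k = 0") (simp_all add: mult_ac)
  qed
  also have "\<dots> = (\<Sum>k\<in>K. Pk k * cmi X (Px k) (\<lambda>x. A (k,x)) (\<lambda>x. B (k,x)) (\<lambda>x. C (k,x)))"
    unfolding cmi_def by (simp add: sum_distrib_left)
  finally show ?thesis .
qed

definition xlog2x :: "real \<Rightarrow> real" where "xlog2x x = x * log 2 x"
definition bin_entropy :: "real \<Rightarrow> real" where "bin_entropy t = - xlog2x t - xlog2x (1 - t)"

lemma entropy_cong:
  assumes "\<And>v w. v \<in> Om \<Longrightarrow> w \<in> Om \<Longrightarrow> (F v = F w) = (G v = G w)"
  shows "entropy Om P F = entropy Om P G"
  unfolding entropy_def
proof -
  have "\<And>w. w \<in> Om \<Longrightarrow> pr Om P (\<lambda>v. F v = F w) = pr Om P (\<lambda>v. G v = G w)"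
    by (rule pr_cong) (auto simp: assms)
  then show "- (\<Sum>w\<in>Om. P w * log 2 (pr Om P (\<lambda>v. F v = F w))) = - (\<Sum>w\<in>Om. P w * log 2 (pr Om P (\<lambda>v. G v = G w)))"
    by simp
qed

lemma pr_compl: "pr Om P (\<lambda>v. \<not> F v) = sum P Om - pr Om P F"
  unfolding pr_def by (simp add: sum_subtractf[symmetric] if_distrib cong: if_cong) (rule sum.cong, auto)

lemma entropy_bool:
  fixes F :: "'w \<Rightarrow> bool"
  assumes tot: "sum P Om = 1"
  shows "entropy Om P F = bin_entropy (pr Om P F)"
proof -
  have "\<And>w. w \<in> Om \<Longrightarrow> P w * log 2 (pr Om P (\<lambda>v. F v = F w)) =
        (if F w then P w else 0) * log 2 (pr Om P F) + (if \<not> F w then P w else 0) * log 2 (pr Om P (\<lambda>v. \<not> F v))"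
    by (auto)
  then have "(\<Sum>w\<in>Om. P w * log 2 (pr Om P (\<lambda>v. F v = F w))) =
      (\<Sum>w\<in>Om. (if F w then P w else 0) * log 2 (pr Om P F) + (if \<not> F w then P w else 0) * log 2 (pr Om P (\<lambda>v. \<not> F v)))"
    by (rule sum.cong[OF refl])
  also have "\<dots> = pr Om P F * log 2 (pr Om P F) + pr Om P (\<lambda>v. \<not> F v) * log 2 (pr Om P (\<lambda>v. \<not> F v))"
    unfolding pr_def by (simp add: sum.distrib sum_distrib_right)
  finally show ?thesis unfolding entropy_def bin_entropy_def xlog2x_def pr_compl tot by simp
qed

lemma entropy_const:
  assumes tot: "sum P Om = 1"
  shows "entropy Om P (\<lambda>_. c) = 0"
  unfolding entropy_def pr_def using tot by simp

lemma entropy_mixture: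
  assumes K: "finite K" and X: "finite X"
    and nn: "\<And>k. k \<in> K \<Longrightarrow> 0 \<le> Pk k" "\<And>k x. k \<in> K \<Longrightarrow> x \<in> X \<Longrightarrow> 0 \<le> Px k x"
    and tot: "\<And>k. k \<in> K \<Longrightarrow> sum (Px k) X = 1"
    and det: "\<And>k x k' x'. k \<in> K \<Longrightarrow> x \<in> X \<Longrightarrow> k' \<in> K \<Longrightarrow> x' \<in> X \<Longrightarrow> F (k',x') = F (k,x) \<Longrightarrow> k' = k"
  shows "entropy (K \<times> X) (\<lambda>(k,x). Pk k * Px k x) F
       = entropy K Pk (\<lambda>k. k) + (\<Sum>k\<in>K. Pk k * entropy X (Px k) (\<lambda>x. F (k,x)))"
proof -
  let ?P = "(\<lambda>(k,x). Pk k * Px k x)"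
  have c: "\<And>k x. k \<in> K \<Longrightarrow> x \<in> X \<Longrightarrow> pr (K \<times> X) ?P (\<lambda>v. F v = F (k,x))
       = Pk k * pr X (Px k) (\<lambda>x'. F (k,x') = F (k,x))"
    using pr_mixture_cell[OF K _ _ det, where E="\<lambda>_. True"] by simp
  have s: "\<And>k. k \<in> K \<Longrightarrow> pr K Pk (\<lambda>k'. k' = k) = Pk k"
    unfolding pr_def using K by (simp add: if_distrib cong: if_cong)
  have "(\<Sum>v\<in>K \<times> X. ?P v * log 2 (pr (K \<times> X) ?P (\<lambda>v'. F v' = F v)))
     = (\<Sum>k\<in>K. \<Sum>x\<in>X. Pk k * Px k x * log 2 (Pk k) + Pk k * (Px k x * log 2 (pr X (Px k) (\<lambda>x'. F (k,x') = F (k,x)))))"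
    unfolding sum_Times prod.case
  proof (rule sum.cong[OF refl], rule sum.cong[OF refl])
    fix k x assume k: "k \<in> K" and x: "x \<in> X"
    show "Pk k * Px k x * log 2 (pr (K \<times> X) ?P (\<lambda>v'. F v' = F (k, x))) =
      Pk k * Px k x * log 2 (Pk k) + Pk k * (Px k x * log 2 (pr X (Px k) (\<lambda>x'. F (k, x') = F (k, x))))"
    proof (cases "Pk k = 0 \<or> Px k x = 0")
      case True then show ?thesis by auto
    next
      case False
      then have "0 < Pk k" "0 < Px k x" using nn k x by force+
      moreover have "Px k x \<le> pr X (Px k) (\<lambda>x'. F (k, x') = F (k, x))"
        by (rule pr_ge_mass[OF X]) (use nn k x in auto)
      ultimately show ?thesis unfolding c[OF k x] by (simp add: log_mult algebra_simps)
    qed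
  qed
  also have "\<dots> = (\<Sum>k\<in>K. Pk k * log 2 (Pk k)) + (\<Sum>k\<in>K. Pk k * (\<Sum>x\<in>X. Px k x * log 2 (pr X (Px k) (\<lambda>x'. F (k,x') = F (k,x)))))"
    by (simp add: sum.distrib sum_distrib_left[symmetric] sum_distrib_right[symmetric] tot mult.assoc
         mult.commute[of "Px _ _"])
  finally have fin: "(\<Sum>v\<in>K \<times> X. ?P v * log 2 (pr (K \<times> X) ?P (\<lambda>v'. F v' = F v))) = (\<Sum>k\<in>K. Pk k * log 2 (Pk k)) + (\<Sum>k\<in>K. Pk k * (\<Sum>x\<in>X. Px k x * log 2 (pr X (Px k) (\<lambda>x'. F (k,x') = F (k,x)))))" .
  have s2: "(\<Sum>k\<in>K. Pk k * log 2 (pr K Pk (\<lambda>k'. k' = k))) = (\<Sum>k\<in>K. Pk k * log 2 (Pk k))"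
    by (rule sum.cong) (simp_all add: s)
  have s3: "(\<Sum>k\<in>K. Pk k * - (\<Sum>x\<in>X. Px k x * log 2 (pr X (Px k) (\<lambda>x'. F (k,x') = F (k,x)))))
      = - (\<Sum>k\<in>K. Pk k * (\<Sum>x\<in>X. Px k x * log 2 (pr X (Px k) (\<lambda>x'. F (k,x') = F (k,x)))))"
    by (simp add: sum_negf)
  show ?thesis unfolding entropy_def s2 s3 fin by simp
qed

lemma sum_pr_marginal:
  assumes fin: "finite Om" and sub: "F ` Om \<subseteq> I" and fI: "finite I"
  shows "(\<Sum>x\<in>I. pr Om P (\<lambda>v. F v = x \<and> E v)) = pr Om P E"
proof -
  have "(\<Sum>x\<in>I. pr Om P (\<lambda>v. F v = x \<and> E v)) = (\<Sum>w\<in>Om. \<Sum>x\<in>I. if F w = x \<and> E w then P w else 0)"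
    unfolding pr_def by (rule sum.swap)
  also have "\<dots> = (\<Sum>w\<in>Om. if E w then P w else 0)"
  proof (rule sum.cong[OF refl])
    fix w assume "w \<in> Om"
    then have "F w \<in> I" using sub by auto
    then show "(\<Sum>x\<in>I. if F w = x \<and> E w then P w else 0) = (if E w then P w else 0)"
      using fI by (simp add: if_distrib[symmetric] cong: if_cong)
  qed
  finally show ?thesis unfolding pr_def .
qed

lemma log_ratio_ge:
  fixes a c d e p :: real
  assumes pos: "0 < a" "0 < c" "0 < d" "0 < e" and pw: "0 \<le> p"
  shows "(p - p * (d * e / (a * c))) / ln 2 \<le> p * log 2 (a * c / (d * e))"
proof -
  define y where "y = a * c / (d * e)"
  have y: "0 < y" using pos unfolding y_def by simp
  have "ln (1 / y) \<le> 1 / y - 1" using y by (intro ln_le_minus_one) simp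
  then have ly: "1 - 1 / y \<le> ln y" using y by (simp add: ln_div)
  have "(p - p * (d * e / (a * c))) / ln 2 = p * ((1 - 1/y) / ln 2)"
    unfolding y_def using pos by (simp add: field_simps)
  also have "\<dots> \<le> p * (ln y / ln 2)"
    using ly pw by (intro mult_left_mono divide_right_mono) auto
  also have "\<dots> = p * log 2 (a * c / (d * e))" unfolding y_def log_def by simp
  finally show ?thesis .
qed

definition cond_indep_ratio :: "'w set \<Rightarrow> ('w \<Rightarrow> real) \<Rightarrow> ('w \<Rightarrow> 'a) \<Rightarrow> ('w \<Rightarrow> 'b) \<Rightarrow> ('w \<Rightarrow> 'c) \<Rightarrow> 'w \<Rightarrow> real" where
  "cond_indep_ratio Om P A B C w =
     pr Om P (\<lambda>v. A v = A w \<and> C v = C w) * pr Om P (\<lambda>v. B v = B w \<and> C v = C w)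
     / (pr Om P (\<lambda>v. A v = A w \<and> B v = B w \<and> C v = C w) * pr Om P (\<lambda>v. C v = C w))"

lemma cmi_ge_gibbs:
  assumes fin: "finite Om" and nn: "\<forall>w\<in>Om. 0 \<le> P w"
  shows "(\<Sum>w\<in>Om. P w - P w * cond_indep_ratio Om P A B C w) / ln 2 \<le> cmi Om P A B C"
  unfolding cmi_def sum_divide_distrib
proof (rule sum_mono)
  fix w assume w: "w \<in> Om"
  show "(P w - P w * cond_indep_ratio Om P A B C w) / ln 2
    \<le> P w * log 2 ((pr Om P (\<lambda>v. A v = A w \<and> B v = B w \<and> C v = C w) * pr Om P (\<lambda>v. C v = C w))
             / (pr Om P (\<lambda>v. A v = A w \<and> C v = C w) * pr Om P (\<lambda>v. B v = B w \<and> C v = C w)))"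
  proof (cases "P w = 0")
    case True then show ?thesis by simp
  next
    case False
    then have pw: "0 < P w" using nn w by force
    have g: "\<And>E. E w \<Longrightarrow> 0 < pr Om P E" using pr_ge_mass[OF fin nn w] pw by force
    show ?thesis unfolding cond_indep_ratio_def using pw by (intro log_ratio_ge g) auto
  qed
qed

lemma sum_cond_product_le:
  assumes fin: "finite Om"
  shows "(\<Sum>x\<in>A ` Om. \<Sum>y\<in>B ` Om. \<Sum>z\<in>C ` Om.
           pr Om P (\<lambda>v. A v = x \<and> C v = z) * pr Om P (\<lambda>v. B v = y \<and> C v = z) / pr Om P (\<lambda>v. C v = z))
         \<le> sum P Om"
proof -
  define pAC where "pAC x z = pr Om P (\<lambda>v. A v = x \<and> C v = z)" for x z
  define pBC where "pBC y z = pr Om P (\<lambda>v. B v = y \<and> C v = z)" for y z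
  define pC where "pC z = pr Om P (\<lambda>v. C v = z)" for z
  have finite_images: "finite (A ` Om)" "finite (B ` Om)" "finite (C ` Om)" using fin by auto
  have "(\<Sum>x\<in>A ` Om. \<Sum>y\<in>B ` Om. \<Sum>z\<in>C ` Om. pAC x z * pBC y z / pC z)
      = (\<Sum>x\<in>A ` Om. \<Sum>z\<in>C ` Om. \<Sum>y\<in>B ` Om. pAC x z * pBC y z / pC z)"
    by (rule sum.cong[OF refl], rule sum.swap)
  also have "\<dots> = (\<Sum>z\<in>C ` Om. \<Sum>x\<in>A ` Om. \<Sum>y\<in>B ` Om. pAC x z * pBC y z / pC z)"
    by (rule sum.swap)
  also have "\<dots> = (\<Sum>z\<in>C ` Om. (\<Sum>x\<in>A ` Om. pAC x z) * (\<Sum>y\<in>B ` Om. pBC y z) / pC z)"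
    by (simp add: sum_product sum_divide_distrib)
  also have "\<dots> = (\<Sum>z\<in>C ` Om. pC z * pC z / pC z)"
  proof (rule sum.cong[OF refl])
    fix z
    have "(\<Sum>x\<in>A ` Om. pAC x z) = pC z" unfolding pAC_def pC_def
      by (rule sum_pr_marginal[OF fin _ finite_images(1)]) auto
    moreover have "(\<Sum>y\<in>B ` Om. pBC y z) = pC z" unfolding pBC_def pC_def
      by (rule sum_pr_marginal[OF fin _ finite_images(2)]) auto
    ultimately show "(\<Sum>x\<in>A ` Om. pAC x z) * (\<Sum>y\<in>B ` Om. pBC y z) / pC z = pC z * pC z / pC z" by simp
  qed
  also have "\<dots> \<le> (\<Sum>z\<in>C ` Om. pC z)"
    by (intro sum_mono) (simp add: pC_def)
  also have "\<dots> = sum P Om"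
  proof -
    have "(\<Sum>z\<in>C ` Om. pC z) = pr Om P (\<lambda>_. True)"
      unfolding pC_def using sum_pr_marginal[where F=C and I="C ` Om" and P=P and E="\<lambda>_. True" and Om=Om] fin by simp
    then show ?thesis unfolding pr_def by simp
  qed
  finally show ?thesis unfolding pAC_def pBC_def pC_def .
qed

lemma sum_cond_indep_ratio_le:
  assumes fin: "finite Om" and nn: "\<forall>w\<in>Om. 0 \<le> P w"
  shows "(\<Sum>w\<in>Om. P w * cond_indep_ratio Om P A B C w) \<le> sum P Om"
proof -
  define pABC where "pABC t = pr Om P (\<lambda>v. (A v, B v, C v) = t)" for t
  define pAC where "pAC x z = pr Om P (\<lambda>v. A v = x \<and> C v = z)" for x z
  define pBC where "pBC y z = pr Om P (\<lambda>v. B v = y \<and> C v = z)" for y z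
  define pC where "pC z = pr Om P (\<lambda>v. C v = z)" for z
  define g where "g t = (case t of (x,y,z) \<Rightarrow> pAC x z * pBC y z / pC z)" for t
  define T where "T w = (A w, B w, C w)" for w
  have gnn: "\<And>t. 0 \<le> g t" unfolding g_def pAC_def pBC_def pC_def using nn
    by (auto split: prod.split intro!: divide_nonneg_nonneg mult_nonneg_nonneg pr_nonneg)
  have a_eq: "\<And>w. pr Om P (\<lambda>v. A v = A w \<and> B v = B w \<and> C v = C w) = pABC (T w)"
    unfolding pABC_def T_def by simp
  have q_eq: "\<And>w. P w * cond_indep_ratio Om P A B C w = P w / pABC (T w) * g (T w)"
    unfolding cond_indep_ratio_def a_eq g_def T_def pAC_def pBC_def pC_def by simp
  have finite_images: "finite (A ` Om)" "finite (B ` Om)" "finite (C ` Om)" using fin by auto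
  have fiber_mass: "\<And>t. t \<in> T ` Om \<Longrightarrow> (\<Sum>w\<in>{w\<in>Om. T w = t}. P w) = pABC t"
    unfolding pABC_def pr_def T_def by (rule sum.mono_neutral_cong_left) (use fin in auto)
  have "(\<Sum>w\<in>Om. P w * cond_indep_ratio Om P A B C w) = (\<Sum>w\<in>Om. P w / pABC (T w) * g (T w))"
    unfolding q_eq ..
  also have "\<dots> = (\<Sum>t\<in>T ` Om. \<Sum>w\<in>{w\<in>Om. T w = t}. P w / pABC (T w) * g (T w))"
    using fin by (intro sum.group[symmetric]) auto
  also have "\<dots> = (\<Sum>t\<in>T ` Om. pABC t / pABC t * g t)"
  proof (rule sum.cong[OF refl])
    fix t assume t: "t \<in> T ` Om"
    have "(\<Sum>w\<in>{w\<in>Om. T w = t}. P w / pABC (T w) * g (T w)) = (\<Sum>w\<in>{w\<in>Om. T w = t}. P w) / pABC t * g t"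
      by (simp add: sum_divide_distrib sum_distrib_right)
    then show "(\<Sum>w\<in>{w\<in>Om. T w = t}. P w / pABC (T w) * g (T w)) = pABC t / pABC t * g t"
      using fiber_mass[OF t] by simp
  qed
  also have "\<dots> \<le> (\<Sum>t\<in>T ` Om. g t)"
    by (intro sum_mono) (auto intro: mult_left_le_one_le gnn simp: divide_le_eq_1)
  also have "\<dots> \<le> (\<Sum>t\<in>A ` Om \<times> (B ` Om \<times> C ` Om). g t)"
    using finite_images gnn by (intro sum_mono2) (auto simp: T_def)
  also have "\<dots> = (\<Sum>x\<in>A ` Om. \<Sum>y\<in>B ` Om. \<Sum>z\<in>C ` Om. pAC x z * pBC y z / pC z)"
    unfolding sum_Times g_def by simp
  also have "\<dots> \<le> sum P Om"
    unfolding pAC_def pBC_def pC_def by (rule sum_cond_product_le[OF fin])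
  finally show ?thesis .
qed

lemma cmi_nonneg:
  assumes fin: "finite Om" and nn: "\<forall>w\<in>Om. 0 \<le> P w"
  shows "0 \<le> cmi Om P A B C"
proof -
  have "0 \<le> (\<Sum>w\<in>Om. P w - P w * cond_indep_ratio Om P A B C w) / ln 2"
    using sum_cond_indep_ratio_le[OF fin nn, of A B C] by (simp add: sum_subtractf)
  also have "\<dots> \<le> cmi Om P A B C" by (rule cmi_ge_gibbs[OF fin nn])
  finally show ?thesis .
qed

lemma sum_mixture:
  fixes Pk :: "'k \<Rightarrow> real"
  assumes "finite K" "finite X"
  shows "sum (\<lambda>(k,x). Pk k * Px k x) (K \<times> X) = (\<Sum>k\<in>K. Pk k * sum (Px k) X)"
  unfolding sum_Times prod.case by (rule sum.cong[OF refl]) (simp add: sum_distrib_left)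

lemma cmi_mixture_index:
  fixes B :: "'k \<times> 'x \<Rightarrow> bool"
  assumes K: "finite K" and X: "finite X"
    and nn: "\<And>k. k \<in> K \<Longrightarrow> 0 \<le> Pk k" "\<And>k x. k \<in> K \<Longrightarrow> x \<in> X \<Longrightarrow> 0 \<le> Px k x"
    and totK: "sum Pk K = 1" and tot: "\<And>k. k \<in> K \<Longrightarrow> sum (Px k) X = 1"
  shows "cmi (K \<times> X) (\<lambda>(k,x). Pk k * Px k x) (\<lambda>v. fst v) B (\<lambda>_. c)
       = bin_entropy (pr (K \<times> X) (\<lambda>(k,x). Pk k * Px k x) B) - (\<Sum>k\<in>K. Pk k * bin_entropy (pr X (Px k) (\<lambda>x. B (k,x))))"
proof -
  let ?P = "(\<lambda>(k,x). Pk k * Px k x)"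
  have fin: "finite (K \<times> X)" using K X by simp
  have nnP: "\<forall>w\<in>K \<times> X. 0 \<le> ?P w" using nn by auto
  have tP: "sum ?P (K \<times> X) = 1" unfolding sum_mixture[OF K X] using totK tot by simp
  have e1: "entropy (K \<times> X) ?P (\<lambda>w. (fst w, c)) = entropy K Pk (\<lambda>k. k)"
  proof -
    have "entropy (K \<times> X) ?P (\<lambda>w. (fst w, c)) = entropy K Pk (\<lambda>k. k) + (\<Sum>k\<in>K. Pk k * entropy X (Px k) (\<lambda>x. (k, c)))"
      by (subst entropy_mixture[OF K X nn tot]) auto
    also have "(\<Sum>k\<in>K. Pk k * entropy X (Px k) (\<lambda>x. (k, c))) = 0"
      by (rule sum.neutral) (simp add: entropy_const[OF tot])
    finally show ?thesis by simp
  qed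
  have e2: "entropy (K \<times> X) ?P (\<lambda>w. (B w, c)) = bin_entropy (pr (K \<times> X) ?P B)"
  proof -
    have "entropy (K \<times> X) ?P (\<lambda>w. (B w, c)) = entropy (K \<times> X) ?P B" by (rule entropy_cong) auto
    also have "\<dots> = bin_entropy (pr (K \<times> X) ?P B)" by (rule entropy_bool[OF tP])
    finally show ?thesis .
  qed
  have e3: "entropy (K \<times> X) ?P (\<lambda>w. (fst w, B w, c)) = entropy K Pk (\<lambda>k. k) + (\<Sum>k\<in>K. Pk k * bin_entropy (pr X (Px k) (\<lambda>x. B (k,x))))"
  proof -
    have "entropy (K \<times> X) ?P (\<lambda>w. (fst w, B w, c)) = entropy K Pk (\<lambda>k. k) + (\<Sum>k\<in>K. Pk k * entropy X (Px k) (\<lambda>x. (k, B (k,x), c)))"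
      by (subst entropy_mixture[OF K X nn tot]) auto
    also have "(\<Sum>k\<in>K. Pk k * entropy X (Px k) (\<lambda>x. (k, B (k,x), c))) = (\<Sum>k\<in>K. Pk k * bin_entropy (pr X (Px k) (\<lambda>x. B (k,x))))"
    proof (rule sum.cong[OF refl])
      fix k assume k: "k \<in> K"
      have "entropy X (Px k) (\<lambda>x. (k, B (k,x), c)) = entropy X (Px k) (\<lambda>x. B (k,x))" by (rule entropy_cong) auto
      also have "\<dots> = bin_entropy (pr X (Px k) (\<lambda>x. B (k,x)))" by (rule entropy_bool[OF tot[OF k]])
      finally show "Pk k * entropy X (Px k) (\<lambda>x. (k, B (k,x), c)) = Pk k * bin_entropy (pr X (Px k) (\<lambda>x. B (k,x)))" by simp
    qed
    finally show ?thesis .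
  qed
  have e4: "entropy (K \<times> X) ?P (\<lambda>_. c) = 0" by (rule entropy_const[OF tP])
  show ?thesis unfolding cmi_eq_entropies[OF fin nnP] e1 e2 e3 e4 by simp
qed

lemma entropy_coarsen_le:
  assumes fin: "finite Om" and nn: "\<forall>w\<in>Om. 0 \<le> P w"
    and co: "\<And>v w. v \<in> Om \<Longrightarrow> w \<in> Om \<Longrightarrow> F v = F w \<Longrightarrow> G v = G w"
  shows "entropy Om P G \<le> entropy Om P F"
  unfolding entropy_def
proof -
  have "(\<Sum>w\<in>Om. P w * log 2 (pr Om P (\<lambda>v. F v = F w))) \<le> (\<Sum>w\<in>Om. P w * log 2 (pr Om P (\<lambda>v. G v = G w)))"
  proof (rule sum_mono)
    fix w assume w: "w \<in> Om"
    show "P w * log 2 (pr Om P (\<lambda>v. F v = F w)) \<le> P w * log 2 (pr Om P (\<lambda>v. G v = G w))"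
    proof (cases "P w = 0")
      case True then show ?thesis by simp
    next
      case False
      then have pw: "0 < P w" using nn w by force
      have "P w \<le> pr Om P (\<lambda>v. F v = F w)" by (rule pr_ge_mass[OF fin nn w]) simp
      moreover have "pr Om P (\<lambda>v. F v = F w) \<le> pr Om P (\<lambda>v. G v = G w)"
        by (rule pr_mono[OF nn]) (rule co[OF _ w], assumption+)
      ultimately show ?thesis using pw by (intro mult_left_mono log_mono) auto
    qed
  qed
  then show "- (\<Sum>w\<in>Om. P w * log 2 (pr Om P (\<lambda>v. G v = G w))) \<le> - (\<Sum>w\<in>Om. P w * log 2 (pr Om P (\<lambda>v. F v = F w)))"
    by simp
qed

section \<open>Binary entropy\<close>

lemma sum_UNIV_bool: "sum f (UNIV :: bool set) = f False + f True"
  by (simp add: UNIV_bool)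

lemma xlog2x_0[simp]: "xlog2x 0 = 0" and xlog2x_1[simp]: "xlog2x 1 = 0" by (simp_all add: xlog2x_def)
lemma bin_entropy_0[simp]: "bin_entropy 0 = 0" and bin_entropy_1[simp]: "bin_entropy 1 = 0" by (simp_all add: bin_entropy_def)
lemma bin_entropy_sym: "bin_entropy (1 - t) = bin_entropy t" by (simp add: bin_entropy_def)
lemma bin_entropy_half: "bin_entropy (1/2) = 1"
  by (simp add: bin_entropy_def xlog2x_def log_divide)

lemma neg_xlog2x_le: assumes "0 \<le> t" shows "- xlog2x t \<le> (1/2 - t) / ln 2 + t"
proof (cases "t = 0")
  case True then show ?thesis by simp
next
  case False
  with assms have t: "0 < t" by simp
  have "ln (1 / (2*t)) \<le> 1 / (2*t) - 1" using t by (intro ln_le_minus_one) simp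
  then have "t * ln (1 / (2*t)) \<le> t * (1 / (2*t) - 1)" using t by (intro mult_left_mono) auto
  also have "\<dots> = 1/2 - t" using t by (simp add: field_simps)
  finally have a: "t * ln (1 / (2*t)) \<le> 1/2 - t" .
  have L: "ln (1 / (2*t)) = - ln 2 - ln t" using t by (simp add: ln_div ln_mult)
  have l2: "0 < ln (2::real)" by simp
  have "- xlog2x t = t * ln (1 / (2*t)) / ln 2 + t"
    unfolding xlog2x_def log_def L using l2 by (simp add: field_simps)
  also have "\<dots> \<le> (1/2 - t) / ln 2 + t" using a by (simp add: divide_right_mono)
  finally show ?thesis .
qed

lemma bin_entropy_le_1: assumes "0 \<le> t" "t \<le> 1" shows "bin_entropy t \<le> 1"
proof -
  have "bin_entropy t \<le> ((1/2 - t) / ln 2 + t) + ((1/2 - (1 - t)) / ln 2 + (1 - t))"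
    unfolding bin_entropy_def using neg_xlog2x_le[of t] neg_xlog2x_le[of "1-t"] assms by simp
  also have "\<dots> = 1" by (simp add: field_simps)
  finally show ?thesis .
qed

definition bin_conv :: "real \<Rightarrow> real \<Rightarrow> real" where "bin_conv s t = s * (1 - t) + t * (1 - s)"

lemma entropy_bern: "entropy UNIV (bern s) (\<lambda>k. k) = bin_entropy s"
proof -
  have "entropy UNIV (bern s) (\<lambda>k. k) = bin_entropy (pr UNIV (bern s) (\<lambda>k. k))"
    by (rule entropy_bool) (simp add: sum_UNIV_bool bern_def)
  also have "pr UNIV (bern s) (\<lambda>k. k) = s" unfolding pr_def by (simp add: sum_UNIV_bool bern_def)
  finally show ?thesis .
qed

lemma bin_entropy_conv_le:
  assumes "0 \<le> s" "s \<le> 1" "0 \<le> t" "t \<le> 1"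
  shows "bin_entropy (bin_conv s t) \<le> bin_entropy s + bin_entropy t"
proof -
  let ?P = "\<lambda>(k,x). bern s k * bern t x"
  let ?O = "(UNIV::bool set) \<times> (UNIV::bool set)"
  have nn: "\<forall>w\<in>?O. 0 \<le> ?P w" using assms by (auto simp: bern_def)
  have tot: "sum ?P ?O = 1" unfolding sum_mixture[OF finite finite] by (simp add: sum_UNIV_bool bern_def)
  have "bin_entropy (bin_conv s t) = entropy ?O ?P (\<lambda>v. fst v \<noteq> snd v)"
  proof -
    have "entropy ?O ?P (\<lambda>v. fst v \<noteq> snd v) = bin_entropy (pr ?O ?P (\<lambda>v. fst v \<noteq> snd v))" by (rule entropy_bool[OF tot])
    also have "pr ?O ?P (\<lambda>v. fst v \<noteq> snd v) = bin_conv s t"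
      unfolding pr_def sum_Times by (simp add: sum_UNIV_bool bern_def bin_conv_def algebra_simps)
    finally show ?thesis by simp
  qed
  also have "\<dots> \<le> entropy ?O ?P (\<lambda>v. v)" by (rule entropy_coarsen_le[OF _ nn]) auto
  also have "\<dots> = bin_entropy s + bin_entropy t"
  proof -
    have a: "entropy ?O ?P (\<lambda>v. v) = entropy UNIV (bern s) (\<lambda>k. k) + (\<Sum>k\<in>UNIV. bern s k * entropy UNIV (bern t) (\<lambda>x. (k,x)))"
      by (subst entropy_mixture) (use assms in \<open>auto simp: bern_def sum_UNIV_bool\<close>)
    have e: "\<And>k. entropy UNIV (bern t) (\<lambda>x. (k,x)) = bin_entropy t"
    proof -
      fix k
      have "entropy UNIV (bern t) (\<lambda>x. (k,x)) = entropy UNIV (bern t) (\<lambda>x. x)" by (rule entropy_cong) auto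
      then show "entropy UNIV (bern t) (\<lambda>x. (k,x)) = bin_entropy t" using entropy_bern[of t] by simp
    qed
    show ?thesis unfolding a e by (simp add: entropy_bern sum_UNIV_bool bern_def algebra_simps)
  qed
  finally show ?thesis .
qed

section \<open>The scheme for a fixed slot and fixed channel gains\<close>

(* A cell input is ((X1c, X2c), (X1p, X2p)).  A user with parameter a sends X_ic ~ B(a/2) and
   X_ip ~ B(private_bias a), which makes X_i = X_ic \<or> X_ip uniform. *)
definition private_bias :: "real \<Rightarrow> real" where "private_bias a = 1 - 1 / (2 - a)"
definition bit_pairs :: "(bool \<times> bool) set" where "bit_pairs = UNIV \<times> UNIV"
definition common_pmf :: "real \<Rightarrow> real \<Rightarrow> bool \<times> bool \<Rightarrow> real" where
  "common_pmf a b c = bern (a/2) (fst c) * bern (b/2) (snd c)"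
definition private_pmf :: "real \<Rightarrow> real \<Rightarrow> bool \<times> bool \<Rightarrow> real" where
  "private_pmf a b p = bern (private_bias a) (fst p) * bern (private_bias b) (snd p)"
abbreviation "input_pmf a b \<equiv> (\<lambda>(k,x). common_pmf a b k * private_pmf a b x)"

lemma private_bias_range: assumes "0 \<le> a" "a \<le> 1" shows "0 \<le> private_bias a" "private_bias a \<le> 1"
proof -
  have "1 / (2 - a) \<le> 1" using assms by (simp add: divide_le_eq)
  moreover have "0 \<le> 1 / (2 - a)" using assms by simp
  moreover have "1 / (2 - a) \<le> 1 + 1" using \<open>1 / (2 - a) \<le> 1\<close> by simp
  ultimately show "0 \<le> private_bias a" "private_bias a \<le> 1" unfolding private_bias_def by linarith+
qed

lemma finite_bit_pairs[simp]: "finite bit_pairs" by (simp add: bit_pairs_def)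

lemma sum_bit_pairs: "sum f bit_pairs = f (False,False) + f (False,True) + f (True,False) + f (True,True)"
  unfolding bit_pairs_def sum_Times by (simp add: sum_UNIV_bool add.assoc)

lemma pr_bit_pairs: "pr bit_pairs P E = (if E (False,False) then P (False,False) else 0) + (if E (False,True) then P (False,True) else 0)
   + (if E (True,False) then P (True,False) else 0) + (if E (True,True) then P (True,True) else 0)"
  unfolding pr_def sum_bit_pairs ..

lemma pr_bern: "pr UNIV (bern t) E = (if E False then 1 - t else 0) + (if E True then t else 0)"
  unfolding pr_def sum_UNIV_bool by (simp add: bern_def)

lemma private_pmf_split: "private_pmf a b = (\<lambda>(k,x). bern (private_bias a) k * bern (private_bias b) x)"
  by (auto simp: private_pmf_def fun_eq_iff)

lemma cmi_private_fst:
  fixes Bf :: "bool \<times> bool \<Rightarrow> bool"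
  assumes ab: "0 \<le> a" "a \<le> 1" "0 \<le> b" "b \<le> 1"
  shows "cmi bit_pairs (private_pmf a b) (\<lambda>p. fst p) Bf (\<lambda>_. c) =
     bin_entropy (pr bit_pairs (private_pmf a b) Bf) - ((1 - private_bias a) * bin_entropy (pr UNIV (bern (private_bias b)) (\<lambda>x. Bf (False,x)))
                              + private_bias a * bin_entropy (pr UNIV (bern (private_bias b)) (\<lambda>x. Bf (True,x))))"
proof -
  have r: "0 \<le> private_bias a" "private_bias a \<le> 1" "0 \<le> private_bias b" "private_bias b \<le> 1" using private_bias_range ab by auto
  have "cmi bit_pairs (private_pmf a b) (\<lambda>p. fst p) Bf (\<lambda>_. c) =
     bin_entropy (pr (UNIV \<times> UNIV) (\<lambda>(k,x). bern (private_bias a) k * bern (private_bias b) x) Bf) - (\<Sum>k\<in>UNIV. bern (private_bias a) k * bin_entropy (pr UNIV (bern (private_bias b)) (\<lambda>x. Bf (k,x))))"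
    unfolding bit_pairs_def private_pmf_split
    by (rule cmi_mixture_index) (use r in \<open>auto simp: bern_def sum_UNIV_bool\<close>)
  then show ?thesis unfolding bit_pairs_def[symmetric] private_pmf_split[symmetric] by (simp add: sum_UNIV_bool bern_def)
qed

lemma cmi_private_snd:
  fixes Bf :: "bool \<times> bool \<Rightarrow> bool"
  assumes ab: "0 \<le> a" "a \<le> 1" "0 \<le> b" "b \<le> 1"
  shows "cmi bit_pairs (private_pmf a b) (\<lambda>p. snd p) Bf (\<lambda>_. c) =
     bin_entropy (pr bit_pairs (private_pmf a b) Bf) - ((1 - private_bias b) * bin_entropy (pr UNIV (bern (private_bias a)) (\<lambda>x. Bf (x,False)))
                              + private_bias b * bin_entropy (pr UNIV (bern (private_bias a)) (\<lambda>x. Bf (x,True))))"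
proof -
  have "cmi bit_pairs (private_pmf a b) (\<lambda>p. snd p) Bf (\<lambda>_. c) = cmi bit_pairs (private_pmf b a) (\<lambda>p. fst p) (\<lambda>p. Bf (prod.swap p)) (\<lambda>_. c)"
    by (rule cmi_bij_betw[where h=prod.swap]) (auto simp: bit_pairs_def private_pmf_def bij_betw_def)
  also have "\<dots> = bin_entropy (pr bit_pairs (private_pmf b a) (\<lambda>p. Bf (prod.swap p))) - ((1 - private_bias b) * bin_entropy (pr UNIV (bern (private_bias a)) (\<lambda>x. Bf (x,False)))
                              + private_bias b * bin_entropy (pr UNIV (bern (private_bias a)) (\<lambda>x. Bf (x,True))))"
    by (subst cmi_private_fst) (use ab in auto)
  also have "pr bit_pairs (private_pmf b a) (\<lambda>p. Bf (prod.swap p)) = pr bit_pairs (private_pmf a b) Bf"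
    unfolding pr_bit_pairs by (simp add: private_pmf_def algebra_simps)
  finally show ?thesis .
qed

definition cell_X1 :: "(bool \<times> bool) \<times> (bool \<times> bool) \<Rightarrow> bool" where "cell_X1 x = (fst (fst x) \<or> fst (snd x))"
definition cell_X2 :: "(bool \<times> bool) \<times> (bool \<times> bool) \<Rightarrow> bool" where "cell_X2 x = (snd (fst x) \<or> snd (snd x))"
(* g = (G11, G21) for receiver 1 and g = (G22, G12) for receiver 2. *)
definition cell_Y1 :: "bool \<times> bool \<Rightarrow> (bool \<times> bool) \<times> (bool \<times> bool) \<Rightarrow> bool" where
  "cell_Y1 g x = ((fst g \<and> cell_X1 x) \<noteq> (snd g \<and> cell_X2 x))"
definition cell_Y2 :: "bool \<times> bool \<Rightarrow> (bool \<times> bool) \<times> (bool \<times> bool) \<Rightarrow> bool" where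
  "cell_Y2 g x = ((fst g \<and> cell_X2 x) \<noteq> (snd g \<and> cell_X1 x))"

(* private_entropy a = H(X_ip | X_ic); interference_loss a b is the entropy destroyed when both
   private bits are XOR-ed at a receiver. *)
definition private_entropy :: "real \<Rightarrow> real" where "private_entropy a = (1 - a/2) * bin_entropy (private_bias a)"
definition interference_loss :: "real \<Rightarrow> real \<Rightarrow> real" where
  "interference_loss a b = (1 - a/2) * (1 - b/2) * (bin_entropy (private_bias a) + bin_entropy (private_bias b) - bin_entropy (bin_conv (private_bias a) (private_bias b)))"

lemma cell_private1:
  assumes ab: "0 \<le> a" "a \<le> 1" "0 \<le> b" "b \<le> 1"
  shows "cmi (bit_pairs \<times> bit_pairs) (input_pmf a b) (\<lambda>x. fst (snd x)) (cell_Y1 g) (\<lambda>x. fst x)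
     = (if fst g then private_entropy a - (if snd g then interference_loss a b else 0) else 0)"
proof -
  have "cmi (bit_pairs \<times> bit_pairs) (input_pmf a b) (\<lambda>x. fst (snd x)) (cell_Y1 g) (\<lambda>x. fst x)
     = (\<Sum>k\<in>bit_pairs. common_pmf a b k * cmi bit_pairs (private_pmf a b) (\<lambda>p. fst p) (\<lambda>p. cell_Y1 g (k,p)) (\<lambda>p. k))"
    by (subst cmi_mixture) auto
  also have "\<dots> = (if fst g then private_entropy a - (if snd g then interference_loss a b else 0) else 0)"
    unfolding sum_bit_pairs
    apply (simp add: cmi_private_fst[OF ab])
    apply (cases g)
    apply (auto simp: cell_Y1_def cell_X1_def cell_X2_def pr_bit_pairs pr_bern private_pmf_def bern_def bin_entropy_sym private_entropy_def interference_loss_def common_pmf_def bin_conv_def algebra_simps)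
    done
  finally show ?thesis .
qed

lemma pr_mixture:
  assumes K: "finite K"
  shows "pr (K \<times> X) (\<lambda>(k,x). Pk k * Px k x) E = (\<Sum>k\<in>K. Pk k * pr X (Px k) (\<lambda>x. E (k,x)))"
  unfolding pr_def sum_Times prod.case by (simp add: sum_distrib_left if_distrib cong: if_cong)

lemma common_pmf_split: "common_pmf a b = (\<lambda>(k,x). bern (a/2) k * bern (b/2) x)"
  by (auto simp: common_pmf_def fun_eq_iff)

lemma pr_private_pmf: "pr bit_pairs (private_pmf a b) E = (1 - private_bias a) * pr UNIV (bern (private_bias b)) (\<lambda>x. E (False,x)) + private_bias a * pr UNIV (bern (private_bias b)) (\<lambda>x. E (True,x))"
  unfolding bit_pairs_def private_pmf_split pr_mixture[OF finite] sum_UNIV_bool by (simp add: bern_def)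

lemma pr_common_pmf: "pr bit_pairs (common_pmf a b) E = (1 - a/2) * pr UNIV (bern (b/2)) (\<lambda>x. E (False,x)) + a/2 * pr UNIV (bern (b/2)) (\<lambda>x. E (True,x))"
  unfolding bit_pairs_def common_pmf_split pr_mixture[OF finite] sum_UNIV_bool by (simp add: bern_def)

lemma cell_Y1_fun: "cell_Y1 g = (\<lambda>x. (fst g \<and> cell_X1 x) \<noteq> (snd g \<and> cell_X2 x))" by (simp add: fun_eq_iff cell_Y1_def)
lemma cell_Y2_fun: "cell_Y2 g = (\<lambda>x. (fst g \<and> cell_X2 x) \<noteq> (snd g \<and> cell_X1 x))" by (simp add: fun_eq_iff cell_Y2_def)

lemma private_bias_half: "a \<le> 1 \<Longrightarrow> a/2 + (1 - a/2) * private_bias a = 1/2"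
  unfolding private_bias_def by (simp add: field_simps)

lemma pr_input_X1: assumes "a \<le> 1" shows "pr (bit_pairs \<times> bit_pairs) (input_pmf a b) cell_X1 = 1/2"
proof -
  have "pr (bit_pairs \<times> bit_pairs) (input_pmf a b) cell_X1 = a/2 + (1 - a/2) * private_bias a"
    unfolding pr_mixture[OF finite_bit_pairs] sum_bit_pairs pr_private_pmf pr_bern cell_X1_def
    by (simp add: common_pmf_def bern_def algebra_simps)
  then show ?thesis using private_bias_half[OF assms] by simp
qed

lemma pr_input_X2: assumes "b \<le> 1" shows "pr (bit_pairs \<times> bit_pairs) (input_pmf a b) cell_X2 = 1/2"
proof -
  have "pr (bit_pairs \<times> bit_pairs) (input_pmf a b) cell_X2 = b/2 + (1 - b/2) * private_bias b"
    unfolding pr_mixture[OF finite_bit_pairs] sum_bit_pairs pr_private_pmf pr_bern cell_X2_def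
    by (simp add: common_pmf_def bern_def algebra_simps)
  then show ?thesis using private_bias_half[OF assms] by simp
qed

lemma pr_input_X1_neq_X2: "a \<le> 1 \<Longrightarrow> b \<le> 1 \<Longrightarrow> pr (bit_pairs \<times> bit_pairs) (input_pmf a b) (\<lambda>x. cell_X1 x \<noteq> cell_X2 x) = 1/2"
proof -
  have "pr (bit_pairs \<times> bit_pairs) (input_pmf a b) (\<lambda>x. cell_X1 x \<noteq> cell_X2 x) =
     (a/2 + (1 - a/2) * private_bias a) * (1 - (b/2 + (1 - b/2) * private_bias b)) + (1 - (a/2 + (1 - a/2) * private_bias a)) * (b/2 + (1 - b/2) * private_bias b)"
    unfolding pr_mixture[OF finite_bit_pairs] sum_bit_pairs pr_private_pmf pr_bern cell_X2_def cell_X1_def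
    by (simp add: common_pmf_def bern_def field_simps)
  also assume "a \<le> 1" "b \<le> 1"
  then have "(a/2 + (1 - a/2) * private_bias a) * (1 - (b/2 + (1 - b/2) * private_bias b)) + (1 - (a/2 + (1 - a/2) * private_bias a)) * (b/2 + (1 - b/2) * private_bias b) = 1/2"
    by (simp add: private_bias_half)
  finally show ?thesis .
qed

lemma pr_input_X1_eq_not_X2: "a \<le> 1 \<Longrightarrow> b \<le> 1 \<Longrightarrow> pr (bit_pairs \<times> bit_pairs) (input_pmf a b) (\<lambda>x. cell_X1 x = (\<not> cell_X2 x)) = 1/2"
  using pr_input_X1_neq_X2[of a b] by (subst pr_cong[where E'="\<lambda>x. cell_X1 x \<noteq> cell_X2 x" and P'="input_pmf a b"]) auto

lemma pr_input_X2_eq_not_X1: "a \<le> 1 \<Longrightarrow> b \<le> 1 \<Longrightarrow> pr (bit_pairs \<times> bit_pairs) (input_pmf a b) (\<lambda>x. cell_X2 x = (\<not> cell_X1 x)) = 1/2"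
  using pr_input_X1_neq_X2[of a b] by (subst pr_cong[where E'="\<lambda>x. cell_X1 x \<noteq> cell_X2 x" and P'="input_pmf a b"]) auto

lemma cell_common_pair1:
  assumes ab: "0 \<le> a" "a \<le> 1" "0 \<le> b" "b \<le> 1"
  shows "cmi (bit_pairs \<times> bit_pairs) (input_pmf a b) (\<lambda>x. fst x) (cell_Y1 g) (\<lambda>_. c)
     = (if fst g \<and> snd g then 1 - private_entropy a - private_entropy b + interference_loss a b else if fst g then 1 - private_entropy a else if snd g then 1 - private_entropy b else 0)"
proof -
  have r: "0 \<le> private_bias a" "private_bias a \<le> 1" "0 \<le> private_bias b" "private_bias b \<le> 1" using private_bias_range ab by auto
  have "cmi (bit_pairs \<times> bit_pairs) (input_pmf a b) (\<lambda>x. fst x) (cell_Y1 g) (\<lambda>_. c)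
     = bin_entropy (pr (bit_pairs \<times> bit_pairs) (input_pmf a b) (cell_Y1 g)) - (\<Sum>k\<in>bit_pairs. common_pmf a b k * bin_entropy (pr bit_pairs (private_pmf a b) (\<lambda>x. cell_Y1 g (k,x))))"
    by (rule cmi_mixture_index) (use ab r in \<open>auto simp: sum_bit_pairs common_pmf_def private_pmf_def bern_def algebra_simps\<close>)
  also have "\<dots> = (if fst g \<and> snd g then 1 - private_entropy a - private_entropy b + interference_loss a b else if fst g then 1 - private_entropy a else if snd g then 1 - private_entropy b else 0)"
    apply (cases g)
    apply (auto simp: cell_Y1_fun pr_input_X1 pr_input_X2 pr_input_X1_eq_not_X2 ab bin_entropy_half)
    apply (auto simp: sum_bit_pairs cell_X1_def cell_X2_def pr_private_pmf pr_common_pmf pr_bern private_pmf_def bern_def bin_entropy_sym private_entropy_def interference_loss_def common_pmf_def bin_conv_def field_simps)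
    done
  finally show ?thesis .
qed

lemma cell_private2:
  assumes ab: "0 \<le> a" "a \<le> 1" "0 \<le> b" "b \<le> 1"
  shows "cmi (bit_pairs \<times> bit_pairs) (input_pmf a b) (\<lambda>x. snd (snd x)) (cell_Y2 g) (\<lambda>x. fst x)
     = (if fst g then private_entropy b - (if snd g then interference_loss a b else 0) else 0)"
proof -
  have "cmi (bit_pairs \<times> bit_pairs) (input_pmf a b) (\<lambda>x. snd (snd x)) (cell_Y2 g) (\<lambda>x. fst x)
     = (\<Sum>k\<in>bit_pairs. common_pmf a b k * cmi bit_pairs (private_pmf a b) (\<lambda>p. snd p) (\<lambda>p. cell_Y2 g (k,p)) (\<lambda>p. k))"
    by (subst cmi_mixture) auto
  also have "\<dots> = (if fst g then private_entropy b - (if snd g then interference_loss a b else 0) else 0)"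
    unfolding sum_bit_pairs
    apply (simp add: cmi_private_snd[OF ab])
    apply (cases g)
    apply (auto simp: cell_Y2_def cell_X1_def cell_X2_def pr_bit_pairs pr_bern private_pmf_def bern_def bin_entropy_sym private_entropy_def interference_loss_def common_pmf_def bin_conv_def field_simps)
    done
  finally show ?thesis .
qed

lemma cell_common_pair2:
  assumes ab: "0 \<le> a" "a \<le> 1" "0 \<le> b" "b \<le> 1"
  shows "cmi (bit_pairs \<times> bit_pairs) (input_pmf a b) (\<lambda>x. fst x) (cell_Y2 g) (\<lambda>_. c)
     = (if fst g \<and> snd g then 1 - private_entropy a - private_entropy b + interference_loss a b else if fst g then 1 - private_entropy b else if snd g then 1 - private_entropy a else 0)"
proof -
  have r: "0 \<le> private_bias a" "private_bias a \<le> 1" "0 \<le> private_bias b" "private_bias b \<le> 1" using private_bias_range ab by auto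
  have "cmi (bit_pairs \<times> bit_pairs) (input_pmf a b) (\<lambda>x. fst x) (cell_Y2 g) (\<lambda>_. c)
     = bin_entropy (pr (bit_pairs \<times> bit_pairs) (input_pmf a b) (cell_Y2 g)) - (\<Sum>k\<in>bit_pairs. common_pmf a b k * bin_entropy (pr bit_pairs (private_pmf a b) (\<lambda>x. cell_Y2 g (k,x))))"
    by (rule cmi_mixture_index) (use ab r in \<open>auto simp: sum_bit_pairs common_pmf_def private_pmf_def bern_def algebra_simps\<close>)
  also have "\<dots> = (if fst g \<and> snd g then 1 - private_entropy a - private_entropy b + interference_loss a b else if fst g then 1 - private_entropy b else if snd g then 1 - private_entropy a else 0)"
    apply (cases g)
    apply (auto simp: cell_Y2_fun pr_input_X1 pr_input_X2 pr_input_X2_eq_not_X1 ab bin_entropy_half)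
    apply (auto simp: sum_bit_pairs cell_X1_def cell_X2_def pr_private_pmf pr_common_pmf pr_bern private_pmf_def bern_def bin_entropy_sym private_entropy_def interference_loss_def common_pmf_def bin_conv_def field_simps)
    done
  finally show ?thesis .
qed

abbreviation "pmf_c1_private a b \<equiv> (\<lambda>(c1,p). bern (a/2) c1 * private_pmf a b p)"
abbreviation "pmf_c2_private a b \<equiv> (\<lambda>(c2,p). bern (b/2) c2 * private_pmf a b p)"

lemma cell_cmi_common1:
  fixes Y :: "(bool \<times> bool) \<times> (bool \<times> bool) \<Rightarrow> bool"
  assumes ab: "0 \<le> a" "a \<le> 1" "0 \<le> b" "b \<le> 1"
  shows "cmi (bit_pairs \<times> bit_pairs) (input_pmf a b) (\<lambda>x. fst (fst x)) Y (\<lambda>x. snd (fst x))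
    = (\<Sum>c2\<in>UNIV. bern (b/2) c2 * (bin_entropy (pr (UNIV \<times> bit_pairs) (pmf_c1_private a b) (\<lambda>v. Y ((fst v, c2), snd v)))
         - (\<Sum>c1\<in>UNIV. bern (a/2) c1 * bin_entropy (pr bit_pairs (private_pmf a b) (\<lambda>p. Y ((c1,c2),p))))))"
proof -
  have r: "0 \<le> private_bias a" "private_bias a \<le> 1" "0 \<le> private_bias b" "private_bias b \<le> 1" using private_bias_range ab by auto
  have "cmi (bit_pairs \<times> bit_pairs) (input_pmf a b) (\<lambda>x. fst (fst x)) Y (\<lambda>x. snd (fst x))
     = cmi (UNIV \<times> (UNIV \<times> bit_pairs)) (\<lambda>(k,x). bern (b/2) k * pmf_c1_private a b x) (\<lambda>v. fst (snd v))
          (\<lambda>v. Y ((fst (snd v), fst v), snd (snd v))) (\<lambda>v. fst v)"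
    apply (rule cmi_bij_betw[where h="\<lambda>((c1,c2),p). (c2,(c1,p))"])
      apply (simp add: bit_pairs_def)
     apply (rule bij_betw_byWitness[where f'="\<lambda>(c2,(c1,p)). ((c1,c2),p)"])
        apply (auto simp: bit_pairs_def common_pmf_def)
    done
  also have "\<dots> = (\<Sum>c2\<in>UNIV. bern (b/2) c2 * cmi (UNIV \<times> bit_pairs) (pmf_c1_private a b) (\<lambda>v. fst v) (\<lambda>v. Y ((fst v, c2), snd v)) (\<lambda>v. c2))"
    by (subst cmi_mixture) auto
  also have "\<dots> = (\<Sum>c2\<in>UNIV. bern (b/2) c2 * (bin_entropy (pr (UNIV \<times> bit_pairs) (pmf_c1_private a b) (\<lambda>v. Y ((fst v, c2), snd v)))
         - (\<Sum>c1\<in>UNIV. bern (a/2) c1 * bin_entropy (pr bit_pairs (private_pmf a b) (\<lambda>p. Y ((c1,c2),p))))))"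
  proof (rule sum.cong[OF refl])
    fix c2
    have "cmi (UNIV \<times> bit_pairs) (pmf_c1_private a b) (\<lambda>v. fst v) (\<lambda>v. Y ((fst v, c2), snd v)) (\<lambda>v. c2)
      = bin_entropy (pr (UNIV \<times> bit_pairs) (pmf_c1_private a b) (\<lambda>v. Y ((fst v, c2), snd v)))
         - (\<Sum>c1\<in>UNIV. bern (a/2) c1 * bin_entropy (pr bit_pairs (private_pmf a b) (\<lambda>p. Y ((c1,c2),p))))"
      by (subst cmi_mixture_index) (use ab r in \<open>auto simp: sum_bit_pairs sum_UNIV_bool private_pmf_def bern_def algebra_simps\<close>)
    then show "bern (b/2) c2 * cmi (UNIV \<times> bit_pairs) (pmf_c1_private a b) (\<lambda>v. fst v) (\<lambda>v. Y ((fst v, c2), snd v)) (\<lambda>v. c2) =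
      bern (b/2) c2 * (bin_entropy (pr (UNIV \<times> bit_pairs) (pmf_c1_private a b) (\<lambda>v. Y ((fst v, c2), snd v)))
         - (\<Sum>c1\<in>UNIV. bern (a/2) c1 * bin_entropy (pr bit_pairs (private_pmf a b) (\<lambda>p. Y ((c1,c2),p)))))" by simp
  qed
  finally show ?thesis .
qed

lemma cell_cmi_common2:
  fixes Y :: "(bool \<times> bool) \<times> (bool \<times> bool) \<Rightarrow> bool"
  assumes ab: "0 \<le> a" "a \<le> 1" "0 \<le> b" "b \<le> 1"
  shows "cmi (bit_pairs \<times> bit_pairs) (input_pmf a b) (\<lambda>x. snd (fst x)) Y (\<lambda>x. fst (fst x))
    = (\<Sum>c1\<in>UNIV. bern (a/2) c1 * (bin_entropy (pr (UNIV \<times> bit_pairs) (pmf_c2_private a b) (\<lambda>v. Y ((c1, fst v), snd v)))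
         - (\<Sum>c2\<in>UNIV. bern (b/2) c2 * bin_entropy (pr bit_pairs (private_pmf a b) (\<lambda>p. Y ((c1,c2),p))))))"
proof -
  have r: "0 \<le> private_bias a" "private_bias a \<le> 1" "0 \<le> private_bias b" "private_bias b \<le> 1" using private_bias_range ab by auto
  have "cmi (bit_pairs \<times> bit_pairs) (input_pmf a b) (\<lambda>x. snd (fst x)) Y (\<lambda>x. fst (fst x))
     = cmi (UNIV \<times> (UNIV \<times> bit_pairs)) (\<lambda>(k,x). bern (a/2) k * pmf_c2_private a b x) (\<lambda>v. fst (snd v))
          (\<lambda>v. Y ((fst v, fst (snd v)), snd (snd v))) (\<lambda>v. fst v)"
    apply (rule cmi_bij_betw[where h="\<lambda>((c1,c2),p). (c1,(c2,p))"])
      apply (simp add: bit_pairs_def)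
     apply (rule bij_betw_byWitness[where f'="\<lambda>(c1,(c2,p)). ((c1,c2),p)"])
        apply (auto simp: bit_pairs_def common_pmf_def)
    done
  also have "\<dots> = (\<Sum>c1\<in>UNIV. bern (a/2) c1 * cmi (UNIV \<times> bit_pairs) (pmf_c2_private a b) (\<lambda>v. fst v) (\<lambda>v. Y ((c1, fst v), snd v)) (\<lambda>v. c1))"
    by (subst cmi_mixture) auto
  also have "\<dots> = (\<Sum>c1\<in>UNIV. bern (a/2) c1 * (bin_entropy (pr (UNIV \<times> bit_pairs) (pmf_c2_private a b) (\<lambda>v. Y ((c1, fst v), snd v)))
         - (\<Sum>c2\<in>UNIV. bern (b/2) c2 * bin_entropy (pr bit_pairs (private_pmf a b) (\<lambda>p. Y ((c1,c2),p))))))"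
  proof (rule sum.cong[OF refl])
    fix c1
    have "cmi (UNIV \<times> bit_pairs) (pmf_c2_private a b) (\<lambda>v. fst v) (\<lambda>v. Y ((c1, fst v), snd v)) (\<lambda>v. c1)
      = bin_entropy (pr (UNIV \<times> bit_pairs) (pmf_c2_private a b) (\<lambda>v. Y ((c1, fst v), snd v)))
         - (\<Sum>c2\<in>UNIV. bern (b/2) c2 * bin_entropy (pr bit_pairs (private_pmf a b) (\<lambda>p. Y ((c1,c2),p))))"
      by (subst cmi_mixture_index) (use ab r in \<open>auto simp: sum_bit_pairs sum_UNIV_bool private_pmf_def bern_def algebra_simps\<close>)
    then show "bern (a/2) c1 * cmi (UNIV \<times> bit_pairs) (pmf_c2_private a b) (\<lambda>v. fst v) (\<lambda>v. Y ((c1, fst v), snd v)) (\<lambda>v. c1) =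
      bern (a/2) c1 * (bin_entropy (pr (UNIV \<times> bit_pairs) (pmf_c2_private a b) (\<lambda>v. Y ((c1, fst v), snd v)))
         - (\<Sum>c2\<in>UNIV. bern (b/2) c2 * bin_entropy (pr bit_pairs (private_pmf a b) (\<lambda>p. Y ((c1,c2),p)))))" by simp
  qed
  finally show ?thesis .
qed

lemma pr_fix_c2_X1: assumes "a \<le> 1" shows "pr (UNIV \<times> bit_pairs) (pmf_c1_private a b) (\<lambda>v. cell_X1 ((fst v, c), snd v)) = 1/2"
proof -
  have "pr (UNIV \<times> bit_pairs) (pmf_c1_private a b) (\<lambda>v. cell_X1 ((fst v, c), snd v)) = a/2 + (1 - a/2) * private_bias a"
    unfolding pr_mixture[OF finite] sum_UNIV_bool pr_private_pmf pr_bern cell_X1_def by (simp add: bern_def field_simps)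
  then show ?thesis using private_bias_half[OF assms] by simp
qed

lemma pr_fix_c2_X2: "pr (UNIV \<times> bit_pairs) (pmf_c1_private a b) (\<lambda>v. cell_X2 ((fst v, c), snd v)) = (if c then 1 else private_bias b)"
  unfolding pr_mixture[OF finite] sum_UNIV_bool pr_private_pmf pr_bern cell_X2_def by (cases c) (simp_all add: bern_def field_simps)

lemma pr_fix_c2_X1_eq_not_X2: assumes "a \<le> 1" shows "pr (UNIV \<times> bit_pairs) (pmf_c1_private a b) (\<lambda>v. cell_X1 ((fst v, c), snd v) = (\<not> cell_X2 ((fst v, c), snd v))) = 1/2"
proof -
  define q where "q = (if c then 1 else private_bias b)"
  have e: "pr (UNIV \<times> bit_pairs) (pmf_c1_private a b) (\<lambda>v. cell_X1 ((fst v, c), snd v) = (\<not> cell_X2 ((fst v, c), snd v)))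
      = (a/2 + (1 - a/2) * private_bias a) * (1 - q) + (1 - (a/2 + (1 - a/2) * private_bias a)) * q"
    unfolding pr_mixture[OF finite] sum_UNIV_bool pr_private_pmf pr_bern cell_X1_def cell_X2_def q_def
    by (cases c) (simp_all add: bern_def field_simps)
  show ?thesis unfolding e private_bias_half[OF assms] by (simp add: field_simps)
qed

lemma pr_fix_c2_X2_eq_not_X1: assumes "a \<le> 1" shows "pr (UNIV \<times> bit_pairs) (pmf_c1_private a b) (\<lambda>v. cell_X2 ((fst v, c), snd v) = (\<not> cell_X1 ((fst v, c), snd v))) = 1/2"
  using pr_fix_c2_X1_eq_not_X2[OF assms, of b c] by (subst pr_cong[where E'="\<lambda>v. cell_X1 ((fst v, c), snd v) = (\<not> cell_X2 ((fst v, c), snd v))" and P'="pmf_c1_private a b"]) auto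

lemma pr_fix_c1_X2: assumes "b \<le> 1" shows "pr (UNIV \<times> bit_pairs) (pmf_c2_private a b) (\<lambda>v. cell_X2 ((c, fst v), snd v)) = 1/2"
proof -
  have "pr (UNIV \<times> bit_pairs) (pmf_c2_private a b) (\<lambda>v. cell_X2 ((c, fst v), snd v)) = b/2 + (1 - b/2) * private_bias b"
    unfolding pr_mixture[OF finite] sum_UNIV_bool pr_private_pmf pr_bern cell_X2_def by (simp add: bern_def field_simps)
  then show ?thesis using private_bias_half[OF assms] by simp
qed

lemma pr_fix_c1_X1: "pr (UNIV \<times> bit_pairs) (pmf_c2_private a b) (\<lambda>v. cell_X1 ((c, fst v), snd v)) = (if c then 1 else private_bias a)"
  unfolding pr_mixture[OF finite] sum_UNIV_bool pr_private_pmf pr_bern cell_X1_def by (cases c) (simp_all add: bern_def field_simps)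

lemma pr_fix_c1_X1_eq_not_X2: assumes "b \<le> 1" shows "pr (UNIV \<times> bit_pairs) (pmf_c2_private a b) (\<lambda>v. cell_X1 ((c, fst v), snd v) = (\<not> cell_X2 ((c, fst v), snd v))) = 1/2"
proof -
  define q where "q = (if c then 1 else private_bias a)"
  have e: "pr (UNIV \<times> bit_pairs) (pmf_c2_private a b) (\<lambda>v. cell_X1 ((c, fst v), snd v) = (\<not> cell_X2 ((c, fst v), snd v)))
      = (b/2 + (1 - b/2) * private_bias b) * (1 - q) + (1 - (b/2 + (1 - b/2) * private_bias b)) * q"
    unfolding pr_mixture[OF finite] sum_UNIV_bool pr_private_pmf pr_bern cell_X1_def cell_X2_def q_def
    by (cases c) (simp_all add: bern_def field_simps)
  show ?thesis unfolding e private_bias_half[OF assms] by (simp add: field_simps)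
qed

lemma pr_fix_c1_X2_eq_not_X1: assumes "b \<le> 1" shows "pr (UNIV \<times> bit_pairs) (pmf_c2_private a b) (\<lambda>v. cell_X2 ((c, fst v), snd v) = (\<not> cell_X1 ((c, fst v), snd v))) = 1/2"
  using pr_fix_c1_X1_eq_not_X2[OF assms, of a c] by (subst pr_cong[where E'="\<lambda>v. cell_X1 ((c, fst v), snd v) = (\<not> cell_X2 ((c, fst v), snd v))" and P'="pmf_c2_private a b"]) auto

lemmas pr_fix_common_simps = pr_fix_c2_X1 pr_fix_c2_X2 pr_fix_c2_X1_eq_not_X2 pr_fix_c2_X2_eq_not_X1 pr_fix_c1_X1 pr_fix_c1_X2 pr_fix_c1_X1_eq_not_X2 pr_fix_c1_X2_eq_not_X1

lemma cell_common1_rx1: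
  assumes ab: "0 \<le> a" "a \<le> 1" "0 \<le> b" "b \<le> 1"
  shows "cmi (bit_pairs \<times> bit_pairs) (input_pmf a b) (\<lambda>x. fst (fst x)) (cell_Y1 g) (\<lambda>x. snd (fst x))
     = (if fst g \<and> snd g then 1 - private_entropy a - private_entropy b + interference_loss a b else if fst g then 1 - private_entropy a else 0)"
proof -
  obtain g1 g2 where g: "g = (g1,g2)" by (cases g)
  show ?thesis unfolding cell_cmi_common1[OF ab] g
    by (cases g1; cases g2; (simp add: sum_UNIV_bool cell_Y1_fun pr_fix_common_simps ab bin_entropy_half)?;
        (auto simp: cell_X1_def cell_X2_def pr_private_pmf pr_bern bern_def bin_entropy_sym private_entropy_def interference_loss_def bin_conv_def field_simps)?)
qed

lemma cell_common1_rx2: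
  assumes ab: "0 \<le> a" "a \<le> 1" "0 \<le> b" "b \<le> 1"
  shows "cmi (bit_pairs \<times> bit_pairs) (input_pmf a b) (\<lambda>x. fst (fst x)) (cell_Y2 g) (\<lambda>x. snd (fst x))
     = (if fst g \<and> snd g then 1 - private_entropy a - private_entropy b + interference_loss a b else if snd g then 1 - private_entropy a else 0)"
proof -
  obtain g1 g2 where g: "g = (g1,g2)" by (cases g)
  show ?thesis unfolding cell_cmi_common1[OF ab] g
    by (cases g1; cases g2; (simp add: sum_UNIV_bool cell_Y2_fun pr_fix_common_simps ab bin_entropy_half)?;
        (auto simp: cell_X1_def cell_X2_def pr_private_pmf pr_bern bern_def bin_entropy_sym private_entropy_def interference_loss_def bin_conv_def field_simps)?)
qed

lemma cell_common2_rx1: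
  assumes ab: "0 \<le> a" "a \<le> 1" "0 \<le> b" "b \<le> 1"
  shows "cmi (bit_pairs \<times> bit_pairs) (input_pmf a b) (\<lambda>x. snd (fst x)) (cell_Y1 g) (\<lambda>x. fst (fst x))
     = (if fst g \<and> snd g then 1 - private_entropy a - private_entropy b + interference_loss a b else if snd g then 1 - private_entropy b else 0)"
proof -
  obtain g1 g2 where g: "g = (g1,g2)" by (cases g)
  show ?thesis unfolding cell_cmi_common2[OF ab] g
    by (cases g1; cases g2; (simp add: sum_UNIV_bool cell_Y1_fun pr_fix_common_simps ab bin_entropy_half)?;
        (auto simp: cell_X1_def cell_X2_def pr_private_pmf pr_bern bern_def bin_entropy_sym private_entropy_def interference_loss_def bin_conv_def field_simps)?)
qed

lemma cell_common2_rx2: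
  assumes ab: "0 \<le> a" "a \<le> 1" "0 \<le> b" "b \<le> 1"
  shows "cmi (bit_pairs \<times> bit_pairs) (input_pmf a b) (\<lambda>x. snd (fst x)) (cell_Y2 g) (\<lambda>x. fst (fst x))
     = (if fst g \<and> snd g then 1 - private_entropy a - private_entropy b + interference_loss a b else if fst g then 1 - private_entropy b else 0)"
proof -
  obtain g1 g2 where g: "g = (g1,g2)" by (cases g)
  show ?thesis unfolding cell_cmi_common2[OF ab] g
    by (cases g1; cases g2; (simp add: sum_UNIV_bool cell_Y2_fun pr_fix_common_simps ab bin_entropy_half)?;
        (auto simp: cell_X1_def cell_X2_def pr_private_pmf pr_bern bern_def bin_entropy_sym private_entropy_def interference_loss_def bin_conv_def field_simps)?)
qed

section \<open>Averaging over the time-sharing slot and the channel gains\<close>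

definition states :: "(nat \<times> (bool \<times> bool)) set" where "states = {1,2} \<times> bit_pairs"
definition state_pmf :: "real \<Rightarrow> real \<Rightarrow> nat \<times> (bool \<times> bool) \<Rightarrow> real" where
  "state_pmf pd pc k = 1/2 * bern pd (fst (snd k)) * bern pc (snd (snd k))"
definition delta1_at :: "real \<Rightarrow> real \<Rightarrow> nat \<Rightarrow> real" where "delta1_at d1 d2 q = (if q = 1 then d1 else d2)"
definition delta2_at :: "real \<Rightarrow> real \<Rightarrow> nat \<Rightarrow> real" where "delta2_at d1 d2 q = (if q = 1 then d2 else d1)"

definition inputs :: "outcome \<Rightarrow> (bool \<times> bool) \<times> (bool \<times> bool)" where
  "inputs w = ((oX1c w, oX2c w), (oX1p w, oX2p w))"
(* view i: the state (Q, gains of receiver i) and the inputs; receiver i's output is a function of it. *)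
definition view1 :: "outcome \<Rightarrow> (nat \<times> (bool \<times> bool)) \<times> ((bool \<times> bool) \<times> (bool \<times> bool))" where
  "view1 w = ((oQ w, oGv1 w), inputs w)"
definition view2 :: "outcome \<Rightarrow> (nat \<times> (bool \<times> bool)) \<times> ((bool \<times> bool) \<times> (bool \<times> bool))" where
  "view2 w = ((oQ w, oGv2 w), inputs w)"

abbreviation "reduced_pmf pd pc d1 d2 \<equiv> (\<lambda>(k,x). state_pmf pd pc k * input_pmf (delta1_at d1 d2 (fst k)) (delta2_at d1 d2 (fst k)) x)"

lemma sum_UNIV_pair: "sum f (UNIV :: (bool \<times> bool) set) = f (False,False) + f (False,True) + f (True,False) + f (True,True)"
  using sum_bit_pairs[of f] by (simp add: bit_pairs_def)

lemma reduced_pmf_view1: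
  assumes y: "y \<in> states \<times> (bit_pairs \<times> bit_pairs)"
  shows "reduced_pmf pd pc d1 d2 y = (\<Sum>w\<in>{w\<in>Omega. view1 w = y}. joint pd pc d1 d2 w)"
proof -
  obtain q g1 g2 c1 c2 p1 p2 where yy: "y = ((q,(g1,g2)),((c1,c2),(p1,p2)))" by (cases y) auto
  have q: "q = 1 \<or> q = 2" using y yy by (auto simp: states_def)
  have S: "{w\<in>Omega. view1 w = y} = (\<lambda>(g3,g4). (q,c1,p1,c2,p2,g1,g2,g3,g4)) ` UNIV"
    using q unfolding yy by (auto simp: Omega_def view1_def inputs_def oQ_def oGv1_def oG11_def oG21_def
      oX1c_def oX2c_def oX1p_def oX2p_def image_iff)
  have inj: "inj_on (\<lambda>(g3,g4). (q,c1,p1,c2,p2,g1,g2,g3::bool,g4::bool)) UNIV" by (auto simp: inj_on_def)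
  show ?thesis unfolding S sum.reindex[OF inj] sum_UNIV_pair
    using q unfolding yy
    by (auto simp: joint_def Let_def oQ_def oX1c_def oX1p_def oX2c_def oX2p_def oG11_def oG21_def oG22_def oG12_def
       state_pmf_def common_pmf_def private_pmf_def private_bias_def delta1_at_def delta2_at_def bern_def field_simps)
qed

lemma reduced_pmf_view2:
  assumes y: "y \<in> states \<times> (bit_pairs \<times> bit_pairs)"
  shows "reduced_pmf pd pc d1 d2 y = (\<Sum>w\<in>{w\<in>Omega. view2 w = y}. joint pd pc d1 d2 w)"
proof -
  obtain q g1 g2 c1 c2 p1 p2 where yy: "y = ((q,(g1,g2)),((c1,c2),(p1,p2)))" by (cases y) auto
  have q: "q = 1 \<or> q = 2" using y yy by (auto simp: states_def)
  have S: "{w\<in>Omega. view2 w = y} = (\<lambda>(g3,g4). (q,c1,p1,c2,p2,g3,g4,g1,g2)) ` UNIV"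
    using q unfolding yy by (auto simp: Omega_def view2_def inputs_def oQ_def oGv2_def oG22_def oG12_def
      oX1c_def oX2c_def oX1p_def oX2p_def image_iff)
  have inj: "inj_on (\<lambda>(g3,g4). (q,c1,p1,c2,p2,g3::bool,g4::bool,g1,g2)) UNIV" by (auto simp: inj_on_def)
  show ?thesis unfolding S sum.reindex[OF inj] sum_UNIV_pair
    using q unfolding yy
    by (auto simp: joint_def Let_def oQ_def oX1c_def oX1p_def oX2c_def oX2p_def oG11_def oG21_def oG22_def oG12_def
       state_pmf_def common_pmf_def private_pmf_def private_bias_def delta1_at_def delta2_at_def bern_def field_simps)
qed

lemma finite_Omega: "finite Omega" by (simp add: Omega_def)

lemma cmi_Omega_mixture:
  assumes pj: "pj = view1 \<or> pj = view2"
    and eq: "\<And>w. w \<in> Omega \<Longrightarrow> A w = AN (pj w) \<and> B w = BN (pj w) \<and> C w = CN (pj w)"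
    and det: "\<And>k x k' x'. CN (k',x') = CN (k,x) \<Longrightarrow> k' = k"
  shows "cmi Omega (joint pd pc d1 d2) A B C =
     (\<Sum>k\<in>states. state_pmf pd pc k * cmi (bit_pairs \<times> bit_pairs) (input_pmf (delta1_at d1 d2 (fst k)) (delta2_at d1 d2 (fst k)))
        (\<lambda>x. AN (k,x)) (\<lambda>x. BN (k,x)) (\<lambda>x. CN (k,x)))"
proof -
  have "cmi Omega (joint pd pc d1 d2) A B C = cmi (states \<times> (bit_pairs \<times> bit_pairs)) (reduced_pmf pd pc d1 d2) AN BN CN"
  proof (rule cmi_pushforward[where \<pi>=pj])
    show "finite Omega" by (rule finite_Omega)
    show "finite (states \<times> (bit_pairs \<times> bit_pairs))" by (simp add: states_def)
    show "pj ` Omega \<subseteq> states \<times> (bit_pairs \<times> bit_pairs)" using pj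
      by (auto simp: Omega_def view1_def view2_def states_def bit_pairs_def oQ_def)
    show "\<And>y. y \<in> states \<times> (bit_pairs \<times> bit_pairs) \<Longrightarrow> reduced_pmf pd pc d1 d2 y = (\<Sum>w\<in>{w\<in>Omega. pj w = y}. joint pd pc d1 d2 w)"
      using pj reduced_pmf_view1 reduced_pmf_view2 by blast
  qed (rule eq)
  also have "\<dots> = (\<Sum>k\<in>states. state_pmf pd pc k * cmi (bit_pairs \<times> bit_pairs) (input_pmf (delta1_at d1 d2 (fst k)) (delta2_at d1 d2 (fst k)))
        (\<lambda>x. AN (k,x)) (\<lambda>x. BN (k,x)) (\<lambda>x. CN (k,x)))"
    by (rule cmi_mixture) (simp add: states_def, use det in blast)
  finally show ?thesis .
qed

lemma sum_states: "sum f states = f (1,(False,False)) + f (1,(False,True)) + f (1,(True,False)) + f (1,(True,True))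
   + f (2,(False,False)) + f (2,(False,True)) + f (2,(True,False)) + f (2,(True,True))"
  unfolding states_def sum_Times sum_bit_pairs by (simp add: add.assoc)

definition gain_average :: "real \<Rightarrow> real \<Rightarrow> (bool \<times> bool \<Rightarrow> real) \<Rightarrow> real" where
  "gain_average pd pc f = pd * pc * f (True,True) + pd * (1 - pc) * f (True,False)
     + (1 - pd) * pc * f (False,True) + (1 - pd) * (1 - pc) * f (False,False)"

lemma delta_at_range: assumes "0 \<le> d1" "d1 \<le> 1" "0 \<le> d2" "d2 \<le> 1"
  shows "0 \<le> delta1_at d1 d2 q" "delta1_at d1 d2 q \<le> 1" "0 \<le> delta2_at d1 d2 q" "delta2_at d1 d2 q \<le> 1"
  using assms by (auto simp: delta1_at_def delta2_at_def)

lemma cmi_cond_cong: "(\<And>v w. v \<in> Om \<Longrightarrow> w \<in> Om \<Longrightarrow> (C v = C w) = (C' v = C' w)) \<Longrightarrow> cmi Om P A B C = cmi Om P A B C'"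
  by (rule cmi_cong) auto

(* Given the state, the inputs follow input_pmf with the parameters of the current slot, so a
   mutual information conditioned on the state is the state average of a cell quantity. *)
lemma cmi_Omega_cells:
  assumes d: "0 \<le> d1" "d1 \<le> 1" "0 \<le> d2" "d2 \<le> 1"
    and view: "view = view1 \<or> view = view2"
    and A: "\<And>w. w \<in> Omega \<Longrightarrow> A w = Ac (snd (view w))"
    and B: "\<And>w. w \<in> Omega \<Longrightarrow> B w = Bc (snd (fst (view w))) (snd (view w))"
    and C: "\<And>v w. v \<in> Omega \<Longrightarrow> w \<in> Omega \<Longrightarrow>
              (C v = C w) = ((Cc (snd (view v)), fst (view v)) = (Cc (snd (view w)), fst (view w)))"
    and cell: "\<And>a b g. 0 \<le> a \<Longrightarrow> a \<le> 1 \<Longrightarrow> 0 \<le> b \<Longrightarrow> b \<le> 1 \<Longrightarrow>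
                 cmi (bit_pairs \<times> bit_pairs) (input_pmf a b) Ac (Bc g) Cc = F a b g"
  shows "cmi Omega (joint pd pc d1 d2) A B C = (gain_average pd pc (F d1 d2) + gain_average pd pc (F d2 d1)) / 2"
proof -
  let ?cell = "\<lambda>k. input_pmf (delta1_at d1 d2 (fst k)) (delta2_at d1 d2 (fst k))"
  have "cmi Omega (joint pd pc d1 d2) A B C
      = cmi Omega (joint pd pc d1 d2) A B (\<lambda>w. (Cc (snd (view w)), fst (view w)))"
    by (rule cmi_cond_cong) (rule C)
  also have "\<dots> = (\<Sum>k\<in>states. state_pmf pd pc k *
      cmi (bit_pairs \<times> bit_pairs) (?cell k) (\<lambda>x. Ac (snd (k,x))) (\<lambda>x. Bc (snd (fst (k,x))) (snd (k,x)))
        (\<lambda>x. (Cc (snd (k,x)), fst (k,x))))"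
    by (rule cmi_Omega_mixture[OF view]) (auto simp: A B)
  also have "\<dots> = (\<Sum>k\<in>states. state_pmf pd pc k * F (delta1_at d1 d2 (fst k)) (delta2_at d1 d2 (fst k)) (snd k))"
  proof (rule sum.cong[OF refl])
    fix k :: "nat \<times> bool \<times> bool"
    have "cmi (bit_pairs \<times> bit_pairs) (?cell k) (\<lambda>x. Ac (snd (k,x))) (\<lambda>x. Bc (snd (fst (k,x))) (snd (k,x)))
          (\<lambda>x. (Cc (snd (k,x)), fst (k,x))) = cmi (bit_pairs \<times> bit_pairs) (?cell k) Ac (Bc (snd k)) Cc"
      unfolding fst_conv snd_conv by (rule cmi_cond_cong) auto
    also have "\<dots> = F (delta1_at d1 d2 (fst k)) (delta2_at d1 d2 (fst k)) (snd k)"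
      by (rule cell) (rule delta_at_range[OF d])+
    finally show "state_pmf pd pc k * cmi (bit_pairs \<times> bit_pairs) (?cell k) (\<lambda>x. Ac (snd (k,x)))
          (\<lambda>x. Bc (snd (fst (k,x))) (snd (k,x))) (\<lambda>x. (Cc (snd (k,x)), fst (k,x)))
        = state_pmf pd pc k * F (delta1_at d1 d2 (fst k)) (delta2_at d1 d2 (fst k)) (snd k)" by simp
  qed
  also have "\<dots> = (gain_average pd pc (F d1 d2) + gain_average pd pc (F d2 d1)) / 2"
    unfolding sum_states gain_average_def
    by (simp add: state_pmf_def delta1_at_def delta2_at_def bern_def field_simps)
  finally show ?thesis .
qed

definition mean_private_entropy :: "real \<Rightarrow> real \<Rightarrow> real" where
  "mean_private_entropy d1 d2 = (private_entropy d1 + private_entropy d2) / 2"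

lemma interference_loss_sym: "interference_loss a b = interference_loss b a"
  unfolding interference_loss_def bin_conv_def by (simp add: algebra_simps)

lemmas rate_simps = gain_average_def mean_private_entropy_def interference_loss_sym

lemma cmi_private1:
  assumes d: "0 \<le> d1" "d1 \<le> 1" "0 \<le> d2" "d2 \<le> 1"
  shows "cmi Omega (joint pd pc d1 d2) oX1p oY1 (\<lambda>w. (oX1c w, oX2c w, oQ w, oGv1 w))
    = pd * mean_private_entropy d1 d2 - pd * pc * interference_loss d1 d2"
  by (subst cmi_Omega_cells[OF d, where view=view1 and Ac="\<lambda>x. fst (snd x)" and Bc=cell_Y1 and Cc=fst
        and F="\<lambda>a b g. if fst g then private_entropy a - (if snd g then interference_loss a b else 0) else 0"])
     (auto simp: view1_def inputs_def cell_Y1_def cell_X1_def cell_X2_def oY1_def oX1_def oX2_def oGv1_def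
        cell_private1 rate_simps field_simps)

lemma cmi_private2:
  assumes d: "0 \<le> d1" "d1 \<le> 1" "0 \<le> d2" "d2 \<le> 1"
  shows "cmi Omega (joint pd pc d1 d2) oX2p oY2 (\<lambda>w. (oX1c w, oX2c w, oQ w, oGv2 w))
    = pd * mean_private_entropy d1 d2 - pd * pc * interference_loss d1 d2"
  by (subst cmi_Omega_cells[OF d, where view=view2 and Ac="\<lambda>x. snd (snd x)" and Bc=cell_Y2 and Cc=fst
        and F="\<lambda>a b g. if fst g then private_entropy b - (if snd g then interference_loss a b else 0) else 0"])
     (auto simp: view2_def inputs_def cell_Y2_def cell_X1_def cell_X2_def oY2_def oX1_def oX2_def oGv2_def
        cell_private2 rate_simps field_simps)

lemma cmi_common_pair1:
  assumes d: "0 \<le> d1" "d1 \<le> 1" "0 \<le> d2" "d2 \<le> 1"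
  shows "cmi Omega (joint pd pc d1 d2) (\<lambda>w. (oX1c w, oX2c w)) oY1 (\<lambda>w. (oQ w, oGv1 w))
    = (pd + pc - pd * pc) - (pd + pc) * mean_private_entropy d1 d2 + pd * pc * interference_loss d1 d2"
  by (subst cmi_Omega_cells[OF d, where view=view1 and Ac=fst and Bc=cell_Y1 and Cc="\<lambda>_. ()"
        and F="\<lambda>a b g. if fst g \<and> snd g then 1 - private_entropy a - private_entropy b + interference_loss a b
                 else if fst g then 1 - private_entropy a else if snd g then 1 - private_entropy b else 0"])
     (auto simp: view1_def inputs_def cell_Y1_def cell_X1_def cell_X2_def oY1_def oX1_def oX2_def oGv1_def
        cell_common_pair1 rate_simps field_simps)

lemma cmi_common_pair2:
  assumes d: "0 \<le> d1" "d1 \<le> 1" "0 \<le> d2" "d2 \<le> 1"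
  shows "cmi Omega (joint pd pc d1 d2) (\<lambda>w. (oX1c w, oX2c w)) oY2 (\<lambda>w. (oQ w, oGv2 w))
    = (pd + pc - pd * pc) - (pd + pc) * mean_private_entropy d1 d2 + pd * pc * interference_loss d1 d2"
  by (subst cmi_Omega_cells[OF d, where view=view2 and Ac=fst and Bc=cell_Y2 and Cc="\<lambda>_. ()"
        and F="\<lambda>a b g. if fst g \<and> snd g then 1 - private_entropy a - private_entropy b + interference_loss a b
                 else if fst g then 1 - private_entropy b else if snd g then 1 - private_entropy a else 0"])
     (auto simp: view2_def inputs_def cell_Y2_def cell_X1_def cell_X2_def oY2_def oX1_def oX2_def oGv2_def
        cell_common_pair2 rate_simps field_simps)

lemma cmi_common1_rx1:
  assumes d: "0 \<le> d1" "d1 \<le> 1" "0 \<le> d2" "d2 \<le> 1"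
  shows "cmi Omega (joint pd pc d1 d2) oX1c oY1 (\<lambda>w. (oX2c w, oQ w, oGv1 w))
    = pd * (1 - mean_private_entropy d1 d2) - pd * pc * mean_private_entropy d1 d2 + pd * pc * interference_loss d1 d2"
  by (subst cmi_Omega_cells[OF d, where view=view1 and Ac="\<lambda>x. fst (fst x)" and Bc=cell_Y1 and Cc="\<lambda>x. snd (fst x)"
        and F="\<lambda>a b g. if fst g \<and> snd g then 1 - private_entropy a - private_entropy b + interference_loss a b
                 else if fst g then 1 - private_entropy a else 0"])
     (auto simp: view1_def inputs_def cell_Y1_def cell_X1_def cell_X2_def oY1_def oX1_def oX2_def oGv1_def
        cell_common1_rx1 rate_simps field_simps)

lemma cmi_common2_rx1:
  assumes d: "0 \<le> d1" "d1 \<le> 1" "0 \<le> d2" "d2 \<le> 1"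
  shows "cmi Omega (joint pd pc d1 d2) oX2c oY1 (\<lambda>w. (oX1c w, oQ w, oGv1 w))
    = pc * (1 - mean_private_entropy d1 d2) - pd * pc * mean_private_entropy d1 d2 + pd * pc * interference_loss d1 d2"
  by (subst cmi_Omega_cells[OF d, where view=view1 and Ac="\<lambda>x. snd (fst x)" and Bc=cell_Y1 and Cc="\<lambda>x. fst (fst x)"
        and F="\<lambda>a b g. if fst g \<and> snd g then 1 - private_entropy a - private_entropy b + interference_loss a b
                 else if snd g then 1 - private_entropy b else 0"])
     (auto simp: view1_def inputs_def cell_Y1_def cell_X1_def cell_X2_def oY1_def oX1_def oX2_def oGv1_def
        cell_common2_rx1 rate_simps field_simps)

lemma cmi_common1_rx2:
  assumes d: "0 \<le> d1" "d1 \<le> 1" "0 \<le> d2" "d2 \<le> 1"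
  shows "cmi Omega (joint pd pc d1 d2) oX1c oY2 (\<lambda>w. (oX2c w, oQ w, oGv2 w))
    = pc * (1 - mean_private_entropy d1 d2) - pd * pc * mean_private_entropy d1 d2 + pd * pc * interference_loss d1 d2"
  by (subst cmi_Omega_cells[OF d, where view=view2 and Ac="\<lambda>x. fst (fst x)" and Bc=cell_Y2 and Cc="\<lambda>x. snd (fst x)"
        and F="\<lambda>a b g. if fst g \<and> snd g then 1 - private_entropy a - private_entropy b + interference_loss a b
                 else if snd g then 1 - private_entropy a else 0"])
     (auto simp: view2_def inputs_def cell_Y2_def cell_X1_def cell_X2_def oY2_def oX1_def oX2_def oGv2_def
        cell_common1_rx2 rate_simps field_simps)

lemma cmi_common2_rx2:
  assumes d: "0 \<le> d1" "d1 \<le> 1" "0 \<le> d2" "d2 \<le> 1"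
  shows "cmi Omega (joint pd pc d1 d2) oX2c oY2 (\<lambda>w. (oX1c w, oQ w, oGv2 w))
    = pd * (1 - mean_private_entropy d1 d2) - pd * pc * mean_private_entropy d1 d2 + pd * pc * interference_loss d1 d2"
  by (subst cmi_Omega_cells[OF d, where view=view2 and Ac="\<lambda>x. snd (fst x)" and Bc=cell_Y2 and Cc="\<lambda>x. fst (fst x)"
        and F="\<lambda>a b g. if fst g \<and> snd g then 1 - private_entropy a - private_entropy b + interference_loss a b
                 else if fst g then 1 - private_entropy b else 0"])
     (auto simp: view2_def inputs_def cell_Y2_def cell_X1_def cell_X2_def oY2_def oX1_def oX2_def oGv2_def
        cell_common2_rx2 rate_simps field_simps)

section \<open>The sum-rate optimisation\<close>

lemma xlog2x_tendsto_0: "(xlog2x \<longlongrightarrow> 0) (at_right 0)"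
proof -
  have "((\<lambda>t::real. t * ln t / ln 2) \<longlongrightarrow> 0) (at_right 0)" by real_asymp
  moreover have "xlog2x = (\<lambda>t::real. t * ln t / ln 2)" by (auto simp: fun_eq_iff xlog2x_def log_def)
  ultimately show ?thesis by simp
qed

lemma continuous_on_xlog2x: "continuous_on {0..1} xlog2x"
  unfolding continuous_on_eq_continuous_within
proof
  fix x :: real assume x: "x \<in> {0..1}"
  show "continuous (at x within {0..1}) xlog2x"
  proof (cases "x = 0")
    case True
    have "(xlog2x \<longlongrightarrow> xlog2x 0) (at 0 within {0..1})"
      using xlog2x_tendsto_0 by (simp add: at_within_Icc_at_right)
    then show ?thesis using True by (simp add: continuous_within)
  next
    case False
    with x have "0 < x" by simp
    then have "isCont xlog2x x" unfolding xlog2x_def log_def by (intro continuous_intros) auto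
    then show ?thesis by (rule continuous_at_imp_continuous_at_within)
  qed
qed

lemma continuous_on_bin_entropy: "continuous_on {0..1} bin_entropy"
proof -
  have "continuous_on {0..1} (\<lambda>t. xlog2x (1 - t))"
    by (rule continuous_on_compose2[OF continuous_on_xlog2x]) (auto intro: continuous_intros)
  then show ?thesis unfolding bin_entropy_def[abs_def] using continuous_on_xlog2x by (intro continuous_intros)
qed

lemma continuous_on_private_bias: "continuous_on {0..1} private_bias"
  unfolding private_bias_def[abs_def] by (intro continuous_intros) auto

lemma continuous_on_private_entropy: "continuous_on {0..1} private_entropy"
proof -
  have "continuous_on {0..1} (\<lambda>a. bin_entropy (private_bias a))"
    by (rule continuous_on_compose2[OF continuous_on_bin_entropy continuous_on_private_bias]) (auto dest: private_bias_range)
  then show ?thesis unfolding private_entropy_def[abs_def] by (intro continuous_intros) auto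
qed

lemma private_bias_0: "private_bias 0 = 1/2" and private_bias_1: "private_bias 1 = 0" by (simp_all add: private_bias_def)
lemma private_entropy_0: "private_entropy 0 = 1" by (simp add: private_entropy_def private_bias_0 bin_entropy_half)
lemma private_entropy_1: "private_entropy 1 = 0" by (simp add: private_entropy_def private_bias_1)

lemma private_entropy_le_1: assumes "0 \<le> a" "a \<le> 1" shows "private_entropy a \<le> 1"
proof -
  have h: "bin_entropy (private_bias a) \<le> 1" using private_bias_range[OF assms] by (intro bin_entropy_le_1)
  show ?thesis
  proof (cases "0 \<le> bin_entropy (private_bias a)")
    case True
    have "(1 - a/2) * bin_entropy (private_bias a) \<le> 1 * bin_entropy (private_bias a)" using True assms by (intro mult_right_mono) auto
    then show ?thesis using h by (simp add: private_entropy_def)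
  next
    case False
    then have "(1 - a/2) * bin_entropy (private_bias a) \<le> 0" using assms by (intro mult_nonneg_nonpos) auto
    then show ?thesis by (simp add: private_entropy_def)
  qed
qed

lemma mean_private_entropy_le_1: assumes "0 \<le> d1" "d1 \<le> 1" "0 \<le> d2" "d2 \<le> 1" shows "mean_private_entropy d1 d2 \<le> 1"
  using private_entropy_le_1[of d1] private_entropy_le_1[of d2] assms unfolding mean_private_entropy_def by simp

lemma interference_loss_nonneg: assumes "0 \<le> a" "a \<le> 1" "0 \<le> b" "b \<le> 1" shows "0 \<le> interference_loss a b"
  unfolding interference_loss_def using bin_entropy_conv_le[of "private_bias a" "private_bias b"] private_bias_range[OF assms(1,2)] private_bias_range[OF assms(3,4)] assms
  by (intro mult_nonneg_nonneg) auto

lemma interference_loss_1: "interference_loss 1 b = 0" by (simp add: interference_loss_def private_bias_1 bin_conv_def)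
lemma interference_loss_00: "interference_loss 0 0 = 1" by (simp add: interference_loss_def private_bias_0 bin_conv_def bin_entropy_half)

lemma HK_rates_iff:
  assumes d: "0 \<le> d1" "d1 \<le> 1" "0 \<le> d2" "d2 \<le> 1"
  shows "HK_rates pd pc d1 d2 r1c r1p r2c r2p \<longleftrightarrow>
    (0 \<le> r1c \<and> 0 \<le> r1p \<and> 0 \<le> r2c \<and> 0 \<le> r2p \<and>
     r1p \<le> pd * mean_private_entropy d1 d2 - pd * pc * interference_loss d1 d2 \<and> r2p \<le> pd * mean_private_entropy d1 d2 - pd * pc * interference_loss d1 d2 \<and>
     r1c + r2c \<le> (pd + pc - pd * pc) - (pd + pc) * mean_private_entropy d1 d2 + pd * pc * interference_loss d1 d2 \<and>
     r1c \<le> pd * (1 - mean_private_entropy d1 d2) - pd * pc * mean_private_entropy d1 d2 + pd * pc * interference_loss d1 d2 \<and>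
     r2c \<le> pc * (1 - mean_private_entropy d1 d2) - pd * pc * mean_private_entropy d1 d2 + pd * pc * interference_loss d1 d2 \<and>
     r1c \<le> pc * (1 - mean_private_entropy d1 d2) - pd * pc * mean_private_entropy d1 d2 + pd * pc * interference_loss d1 d2 \<and>
     r2c \<le> pd * (1 - mean_private_entropy d1 d2) - pd * pc * mean_private_entropy d1 d2 + pd * pc * interference_loss d1 d2)"
  unfolding HK_rates_def cmi_private1[OF d] cmi_private2[OF d] cmi_common_pair1[OF d] cmi_common_pair2[OF d]
    cmi_common1_rx1[OF d] cmi_common2_rx1[OF d] cmi_common1_rx2[OF d] cmi_common2_rx2[OF d] by auto

lemma joint_nonneg:
  assumes "0 \<le> pd" "pd \<le> 1" "0 \<le> pc" "pc \<le> 1" "0 \<le> d1" "d1 \<le> 1" "0 \<le> d2" "d2 \<le> 1"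
  shows "0 \<le> joint pd pc d1 d2 w"
proof -
  have r: "\<And>a. 0 \<le> a \<Longrightarrow> a \<le> 1 \<Longrightarrow> 0 \<le> bern (a/2) x \<and> 0 \<le> bern (1 - 1/(2 - a)) x" for x
    using private_bias_range by (auto simp: bern_def private_bias_def)
  have b: "0 \<le> bern pd x" "0 \<le> bern pc x" for x using assms by (auto simp: bern_def)
  show ?thesis unfolding joint_def Let_def
    using r[of d1] r[of d2] b assms by (auto intro!: mult_nonneg_nonneg)
qed

lemma HK_rates_zero:
  assumes "0 \<le> pd" "pd \<le> 1" "0 \<le> pc" "pc \<le> 1" "0 \<le> d1" "d1 \<le> 1" "0 \<le> d2" "d2 \<le> 1"
  shows "HK_rates pd pc d1 d2 0 0 0 0"
proof -
  have nn: "\<forall>w\<in>Omega. 0 \<le> joint pd pc d1 d2 w" using joint_nonneg[OF assms] by blast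
  show ?thesis unfolding HK_rates_def by (simp add: cmi_nonneg[OF finite_Omega nn])
qed

lemma Rsum_le_if_bounded:
  assumes bound: "\<And>r1c r1p r2c r2p. HK_rates pd pc d1 d2 r1c r1p r2c r2p \<Longrightarrow> r1c + r1p + r2c + r2p \<le> V"
    and z: "HK_rates pd pc d1 d2 0 0 0 0"
  shows "Rsum pd pc d1 d2 \<le> V"
  unfolding Rsum_def
proof (rule cSup_least)
  show "{r1c + r1p + r2c + r2p |r1c r1p r2c r2p. HK_rates pd pc d1 d2 r1c r1p r2c r2p} \<noteq> {}" using z by blast
qed (use bound in blast)

lemma Rsum_eq_if_attained:
  assumes bound: "\<And>r1c r1p r2c r2p. HK_rates pd pc d1 d2 r1c r1p r2c r2p \<Longrightarrow> r1c + r1p + r2c + r2p \<le> V"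
    and h: "HK_rates pd pc d1 d2 r1c r1p r2c r2p" and s: "r1c + r1p + r2c + r2p = V"
  shows "Rsum pd pc d1 d2 = V"
  unfolding Rsum_def
  by (rule cSup_eq_maximum) (use h s bound in blast)+

definition sum_rate_opt :: "real \<Rightarrow> real \<Rightarrow> real" where
  "sum_rate_opt pd pc = (if pc \<le> pd / (1 + pd) then 2 * pd * (1 - pc)
                         else pd + pc - pd * pc + (pd - pc) / 2 * Cstar pd pc)"

lemma Cstar_high_regime:
  assumes p: "0 \<le> pc" "pc \<le> pd" "pd \<le> 1" and high: "\<not> pc \<le> pd / (1 + pd)"
  shows "0 \<le> Cstar pd pc / 2" "Cstar pd pc / 2 \<le> 1/2"
    and "2 * pc + 2 * (pd - pc - pd * pc) * (Cstar pd pc / 2) = (pd + pc - pd * pc) + (pd - pc) * (Cstar pd pc / 2)"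
    and "sum_rate_opt pd pc = (pd + pc - pd * pc) + (pd - pc) * (Cstar pd pc / 2)"
proof -
  have num: "0 < pd * pc - (pd - pc)"
    using high p by (simp add: not_le divide_less_eq algebra_simps)
  define D where "D = 2 * pd * pc - (pd - pc)"
  have "0 \<le> pd * pc" using p by simp
  then have D: "0 < D" unfolding D_def using num by linarith
  have Cs: "Cstar pd pc / 2 = (pd * pc - (pd - pc)) / D"
    unfolding Cstar_def D_def using D by (simp add: D_def field_simps)
  show "0 \<le> Cstar pd pc / 2" unfolding Cs using num D by simp
  show "Cstar pd pc / 2 \<le> 1/2" unfolding Cs using D p by (simp add: divide_le_eq D_def algebra_simps)
  show "2 * pc + 2 * (pd - pc - pd * pc) * (Cstar pd pc / 2) = (pd + pc - pd * pc) + (pd - pc) * (Cstar pd pc / 2)"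
    unfolding Cs using D by (simp add: D_def field_simps)
  show "sum_rate_opt pd pc = (pd + pc - pd * pc) + (pd - pc) * (Cstar pd pc / 2)"
    using high by (simp add: sum_rate_opt_def)
qed

lemma HK_sum_rate_le:
  assumes p: "0 \<le> pc" "pc \<le> pd" "pd \<le> 1" and d: "0 \<le> d1" "d1 \<le> 1" "0 \<le> d2" "d2 \<le> 1"
    and h: "HK_rates pd pc d1 d2 r1c r1p r2c r2p"
  shows "r1c + r1p + r2c + r2p \<le> sum_rate_opt pd pc"
proof -
  let ?U = "mean_private_entropy d1 d2" and ?E = "pd * pc * interference_loss d1 d2"
  have U: "?U \<le> 1" by (rule mean_private_entropy_le_1[OF d])
  have E: "0 \<le> ?E" using interference_loss_nonneg[OF d] p by simp
  note hk = h[unfolded HK_rates_iff[OF d]]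
  have via_pair: "r1c + r1p + r2c + r2p \<le> (pd + pc - pd * pc) + (pd - pc) * ?U"
    using hk E by (elim conjE) (unfold ring_distribs mult_1_right, linarith)
  have via_single: "r1c + r1p + r2c + r2p \<le> 2 * pc + 2 * (pd - pc - pd * pc) * ?U"
    using hk by (elim conjE) (unfold ring_distribs mult_1_right, linarith)
  show ?thesis
  proof (cases "pc \<le> pd / (1 + pd)")
    case True
    then have "0 \<le> pd - pc - pd * pc" using p by (simp add: le_divide_eq algebra_simps)
    then have "(pd - pc - pd * pc) * ?U \<le> pd - pc - pd * pc" using U by (simp add: mult_left_le)
    then show ?thesis using via_single True by (simp add: sum_rate_opt_def algebra_simps)
  next
    case False
    let ?Us = "Cstar pd pc / 2"
    note Us = Cstar_high_regime[OF p False]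
    have c0: "pd - pc - pd * pc < 0" using False p by (simp add: not_le divide_less_eq algebra_simps)
    show ?thesis
    proof (cases "?U \<le> ?Us")
      case True
      then have "(pd - pc) * ?U \<le> (pd - pc) * ?Us" using p by (intro mult_left_mono) auto
      then show ?thesis using via_pair Us(4) by linarith
    next
      case False
      then have "(pd - pc - pd * pc) * ?U \<le> (pd - pc - pd * pc) * ?Us" using c0 by (intro mult_left_mono_neg) auto
      then show ?thesis using via_single Us(3,4) by linarith
    qed
  qed
qed

lemma Rsum_le_sum_rate_opt:
  assumes p: "0 \<le> pc" "pc \<le> pd" "pd \<le> 1" and d: "0 \<le> d1" "d1 \<le> 1" "0 \<le> d2" "d2 \<le> 1"
  shows "Rsum pd pc d1 d2 \<le> sum_rate_opt pd pc"
  using p d by (intro Rsum_le_if_bounded HK_sum_rate_le HK_rates_zero) auto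

lemma Rsum_attains_sum_rate_opt:
  assumes p: "0 \<le> pc" "pc \<le> pd" "pd \<le> 1"
  shows "\<exists>d1\<in>{0..1}. \<exists>d2\<in>{0..1}. Rsum pd pc d1 d2 = sum_rate_opt pd pc"
proof (cases "pc \<le> pd / (1 + pd)")
  case True
  have d: "(0::real) \<le> 0" "(0::real) \<le> 1" by auto
  have U: "mean_private_entropy 0 0 = 1" by (simp add: mean_private_entropy_def private_entropy_0)
  have "0 \<le> pd * pc" "pd * pc \<le> pd" using p by (auto intro: mult_left_le)
  then have "HK_rates pd pc 0 0 0 (pd - pd * pc) 0 (pd - pd * pc)"
    unfolding HK_rates_iff[OF d d] U interference_loss_00 by (simp add: algebra_simps)
  moreover have "0 + (pd - pd * pc) + 0 + (pd - pd * pc) = sum_rate_opt pd pc"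
    using True by (simp add: sum_rate_opt_def algebra_simps)
  ultimately have "Rsum pd pc 0 0 = sum_rate_opt pd pc"
    using p d by (intro Rsum_eq_if_attained HK_sum_rate_le) auto
  then show ?thesis by force
next
  case False
  define u where "u = Cstar pd pc / 2"
  note Us = Cstar_high_regime[OF p False, folded u_def]
  obtain t where t: "0 \<le> t" "t \<le> 1" "private_entropy t = 2 * u"
    using IVT2'[of private_entropy 1 "2 * u" 0] continuous_on_private_entropy private_entropy_0 private_entropy_1 Us
    by auto
  have d: "(0::real) \<le> 1" "(1::real) \<le> 1" "0 \<le> t" "t \<le> 1" using t by auto
  have U: "mean_private_entropy 1 t = u" by (simp add: mean_private_entropy_def private_entropy_1 t)
  define r where "r = pc * (1 - u) - pd * pc * u"
  have "(1 + pd) * u \<le> 2 * (1/2)" using Us p by (intro mult_mono) auto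
  then have "0 \<le> pc * (1 - (1 + pd) * u)" using p by simp
  then have r0: "0 \<le> r" unfolding r_def by (simp add: algebra_simps)
  have pair: "2 * r = (pd + pc - pd * pc) - (pd + pc) * u"
    using Us(3) unfolding r_def by (simp add: algebra_simps)
  have "pc * (1 - u) \<le> pd * (1 - u)" using p Us by (intro mult_right_mono) auto
  then have r_le: "r \<le> pd * (1 - u) - pd * pc * u" unfolding r_def by simp
  have "0 \<le> pd * u" using p Us by simp
  then have "HK_rates pd pc 1 t r (pd * u) r (pd * u)"
    unfolding HK_rates_iff[OF d] U interference_loss_1 using r0 pair r_le by (simp add: r_def[symmetric])
  moreover have "r + pd * u + r + pd * u = sum_rate_opt pd pc"
    using pair by (simp add: Us(4) algebra_simps)
  ultimately have "Rsum pd pc 1 t = sum_rate_opt pd pc"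
    using p d by (intro Rsum_eq_if_attained HK_sum_rate_le) auto
  then show ?thesis using t by force
qed

theorem theorem3:
  fixes pd pc :: real
  assumes "0 \<le> pc" and "pc \<le> pd" and "pd \<le> 1"
  defines "V \<equiv> (if pc \<le> pd / (1 + pd) then 2 * pd * (1 - pc)
                 else pd + pc - pd * pc + (pd - pc) / 2 * Cstar pd pc)"
  shows "(\<exists>d1\<in>{0..1}. \<exists>d2\<in>{0..1}. Rsum pd pc d1 d2 = V)
       \<and> (\<forall>d1\<in>{0..1}. \<forall>d2\<in>{0..1}. Rsum pd pc d1 d2 \<le> V)"
proof -
  have "V = sum_rate_opt pd pc" unfolding V_def sum_rate_opt_def ..
  then show ?thesis
    using Rsum_attains_sum_rate_opt Rsum_le_sum_rate_opt assms(1-3) by auto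
qed

end
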